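(* Suppose $\iota$ is an involution of odd type with patching element $\gamma$. Let $d,\delta\in\Lambda$ be roots ($d^2=\delta^2=-2$) with $\delta_{\mathbb K_\gamma}^2<0$, where $\delta_{\mathbb K_\gamma}$ is the $\mathbb K_\gamma^\vee$-component of $\delta$ in $\Lambda\subset\mathbb K_\gamma^\vee\oplus\mathbb E_\gamma^\vee$. Then $H_d\cap\Omega^+_{\mathbb K_\gamma}=H_\delta\cap\Omega^+_{\mathbb K_\gamma}$ if and only if $d\in\{\pm\delta,\pm I_\mu(\delta)\}$.
   Context: $\Lambda=\mathbb U(2)\oplus\mathbb U\oplus\mathbb E_8(2)\subset\mathbb L_{K3}=\mathbb U^{\oplus3}\oplus\mathbb E_8^{\oplus2}$ (fixed primitive embedding); $\Omega_\Lambda^+$ a fixed component of the period domain $\{[\omega]\in\mathbf P(\Lambda\otimes\mathbb C):\omega^2=0,\langle\omega,\bar\omega\rangle>0\}$; $H_d=\{\omega\in\Omega^+_\Lambda:\langle\omega,d\rangle=0\}$. Setting: $\iota$ a fixed-point-free involution of $K_{\tau,\tau'}=\mathrm{Km}(E_\tau\times E_{\tau'})$ with $\mathbf K\subset H^2(K_{\tau,\tau'},\mathbb Z)_-$ ($\mathbf K\cong\mathbb U(2)\oplus\mathbb U(2)$ the image of $H^1(E_\tau,\mathbb Z)\otimes H^1(E_{\tau'},\mathbb Z)$), $\alpha:H^2(K_{\tau,\tau'},\mathbb Z)\to\mathbb L_{K3}$ a marking with $\alpha(H^2_-)=\Lambda$, $\alpha(H^2_+)=\Lambda^\perp$ and period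 in $\Omega^+_\Lambda$; $\mathbb K_\gamma=\alpha(\mathbf K)$, $\mathbb E_\gamma$ its orthogonal complement in $\Lambda$ ($\cong\mathbb E_8(2)$), $\Omega^+_{\mathbb K_\gamma}=\{[\omega]\in\Omega^+_\Lambda:\omega\in\mathbb K_\gamma\otimes\mathbb C\}$. Patching element: $\Lambda=\mathbb Z(d_1+d_2)+\mathbb K_\gamma\oplus\mathbb E_\gamma$ with $d_1\in\mathbb K_\gamma^\vee\setminus\mathbb K_\gamma$, $d_2\in\mathbb E_\gamma^\vee\setminus\mathbb E_\gamma$, $\gamma=\bar d_1$; odd type means $q_{\mathbf K}(\gamma)=1$ in $\mathbb Z/2$. Let $\mu$ be the anti-symplectic involution of $K_{\tau,\tau'}$ induced by $(x,y)\mapsto(-x,y)$ on $E_\tau\times E_{\tau'}$ and $I_\mu=\alpha\mu^*\alpha^{-1}\in O(\mathbb L_{K3})$; then $\mathbb K_\gamma$ is exactly the $(-1)$-eigenlattice of $I_\mu$ and $\mathbb K_\gamma^{\perp_{\mathbb L_{K3}}}$ its $(+1)$-eigenlattice. *)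

theory Defs
  imports "HOL-Analysis.Analysis" "HOL-Library.Function_Algebras"
begin

text \<open>Lattice vectors in Z^n are functions nat => int vanishing
at indices >= n; rational/complex vectors likewise (nat => rat, nat => complex).
A symmetric bilinear form is given by a Gram matrix G :: nat => nat => int.\<close>

definition zvec :: "nat \<Rightarrow> (nat \<Rightarrow> 'a::zero) set" where
  "zvec n = {x. \<forall>i\<ge>n. x i = 0}"

definition bil :: "nat \<Rightarrow> (nat \<Rightarrow> nat \<Rightarrow> int) \<Rightarrow> (nat \<Rightarrow> 'a::comm_ring_1) \<Rightarrow> (nat \<Rightarrow> 'a) \<Rightarrow> 'a" where
  "bil n G x y = (\<Sum>i<n. \<Sum>j<n. of_int (G i j) * x i * y j)"

definition ivec :: "(nat \<Rightarrow> int) \<Rightarrow> (nat \<Rightarrow> 'a::ring_1)" where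
  "ivec x = (\<lambda>k. of_int (x k))"

text \<open>Gram matrices. U = hyperbolic plane; E8 is negative definite
(minus the Cartan matrix, Bourbaki labelling, 0-indexed).\<close>

definition e8_adj :: "nat \<Rightarrow> nat \<Rightarrow> bool" where
  "e8_adj i j = ((i, j) \<in> {(0,2),(2,0),(2,3),(3,2),(3,4),(4,3),(4,5),(5,4),
                               (5,6),(6,5),(6,7),(7,6),(1,3),(3,1)})"

definition gram_E8 :: "nat \<Rightarrow> nat \<Rightarrow> int" where
  "gram_E8 i j = (if i < 8 \<and> j < 8 then (if i = j then -2 else if e8_adj i j then 1 else 0) else 0)"

definition gram_U :: "nat \<Rightarrow> nat \<Rightarrow> int" where
  "gram_U i j = (if i < 2 \<and> j < 2 \<and> i \<noteq> j then 1 else 0)"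

text \<open>L_K3 = U^3 + E8^2 on indices 0..21.\<close>
definition gram_K3 :: "nat \<Rightarrow> nat \<Rightarrow> int" where
  "gram_K3 i j =
    (if i < 6 \<and> j < 6 then (if i div 2 = j div 2 then gram_U (i mod 2) (j mod 2) else 0)
     else if 6 \<le> i \<and> i < 14 \<and> 6 \<le> j \<and> j < 14 then gram_E8 (i - 6) (j - 6)
     else if 14 \<le> i \<and> i < 22 \<and> 14 \<le> j \<and> j < 22 then gram_E8 (i - 14) (j - 14)
     else 0)"

text \<open>U(2) + U + E8(2) on indices 0..11.\<close>
definition gram_Lambda :: "nat \<Rightarrow> nat \<Rightarrow> int" where
  "gram_Lambda i j =
    (if i < 2 \<and> j < 2 then 2 * gram_U i j
     else if 2 \<le> i \<and> i < 4 \<and> 2 \<le> j \<and> j < 4 then gram_U (i - 2) (j - 2)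
     else if 4 \<le> i \<and> i < 12 \<and> 4 \<le> j \<and> j < 12 then 2 * gram_E8 (i - 4) (j - 4)
     else 0)"

definition gram_U2U2 :: "nat \<Rightarrow> nat \<Rightarrow> int" where
  "gram_U2U2 i j = (if i < 4 \<and> j < 4 \<and> i div 2 = j div 2 then 2 * gram_U (i mod 2) (j mod 2) else 0)"

definition gram_E8_2 :: "nat \<Rightarrow> nat \<Rightarrow> int" where
  "gram_E8_2 i j = 2 * gram_E8 i j"

abbreviation bK3 :: "(nat \<Rightarrow> 'a::comm_ring_1) \<Rightarrow> (nat \<Rightarrow> 'a) \<Rightarrow> 'a" where
  "bK3 \<equiv> bil 22 gram_K3"

definition lat_span :: "nat \<Rightarrow> (nat \<Rightarrow> nat \<Rightarrow> int) \<Rightarrow> (nat \<Rightarrow> int) set" where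
  "lat_span m b = {(\<lambda>k. \<Sum>i<m. c i * b i k) | c. True}"

definition iso_to :: "nat \<Rightarrow> (nat \<Rightarrow> nat \<Rightarrow> int) \<Rightarrow> (nat \<Rightarrow> int) set \<Rightarrow> bool" where
  "iso_to m G S \<longleftrightarrow> (\<exists>b. (\<forall>i<m. b i \<in> zvec 22) \<and>
       (\<forall>i<m. \<forall>j<m. bK3 (b i) (b j) = G i j) \<and> S = lat_span m b)"

definition primitive_in_K3 :: "(nat \<Rightarrow> int) set \<Rightarrow> bool" where
  "primitive_in_K3 S \<longleftrightarrow> (\<forall>x\<in>zvec 22. \<forall>n::int. n \<noteq> 0 \<and> (\<lambda>k. n * x k) \<in> S \<longrightarrow> x \<in> S)"

text \<open>S \<otimes> Q, as rational vectors.\<close>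
definition q_span :: "(nat \<Rightarrow> int) set \<Rightarrow> (nat \<Rightarrow> rat) set" where
  "q_span S = {v. \<exists>n::int. n \<noteq> 0 \<and> (\<exists>s\<in>S. (\<lambda>k. of_int n * v k) = ivec s)}"

definition lat_dual :: "(nat \<Rightarrow> int) set \<Rightarrow> (nat \<Rightarrow> rat) set" where
  "lat_dual S = {v \<in> q_span S. \<forall>y\<in>S. bK3 v (ivec y) \<in> \<int>}"

definition orth_in :: "(nat \<Rightarrow> int) set \<Rightarrow> (nat \<Rightarrow> int) set \<Rightarrow> (nat \<Rightarrow> int) set" where
  "orth_in S K = {x \<in> S. \<forall>y\<in>K. bK3 x y = 0}"

definition cx_span :: "(nat \<Rightarrow> int) set \<Rightarrow> (nat \<Rightarrow> complex) set" where
  "cx_span S = {(\<lambda>k. \<Sum>i<n. c i * of_int (v i k)) | (n::nat) c v. \<forall>i<n. v i \<in> S}"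

text \<open>Affine cone over the period domain of S:
 \<omega> \<in> S \<otimes> C, \<omega>^2 = 0, <\<omega>, conj \<omega>> > 0 (the latter is real automatically).\<close>
definition period_cone :: "(nat \<Rightarrow> int) set \<Rightarrow> (nat \<Rightarrow> complex) set" where
  "period_cone S = {\<omega> \<in> cx_span S. bK3 \<omega> \<omega> = 0 \<and> 0 < Re (bK3 \<omega> (\<lambda>k. cnj (\<omega> k)))}"

definition hyp :: "(nat \<Rightarrow> int) \<Rightarrow> (nat \<Rightarrow> complex) set" where
  "hyp d = {\<omega>. bK3 \<omega> (ivec d) = 0}"

definition isometry_K3 :: "((nat \<Rightarrow> int) \<Rightarrow> (nat \<Rightarrow> int)) \<Rightarrow> bool" where
  "isometry_K3 I \<longleftrightarrow> bij_betw I (zvec 22) (zvec 22) \<and>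
     (\<forall>x\<in>zvec 22. \<forall>y\<in>zvec 22. I (x + y) = I x + I y \<and> bK3 (I x) (I y) = bK3 x y)"

end

theory Submission
  imports Defs
begin

text \<open>Split \<open>v \<in> \<Lambda>\<close> as \<open>v\<^sub>K + v\<^sub>E\<close> with \<open>v\<^sub>K \<in> K\<^sup>\<or>\<close>, \<open>v\<^sub>E \<in> E\<^sup>\<or>\<close>; then
  \<open>v\<^sub>E\<^sup>2 \<le> 0\<close>, and the odd patching element forces \<open>v\<^sub>K\<^sup>2\<close> to be odd or divisible by 4.
  For the roots this gives \<open>\<delta>\<^sub>K\<^sup>2 = \<delta>\<^sub>E\<^sup>2 = -1\<close> and \<open>d\<^sub>K\<^sup>2 \<in> {0, -1}\<close> once \<open>d\<^sub>K\<^sup>2 \<le> 0\<close>.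

  If \<open>H\<^sub>d\<close> and \<open>H\<^sub>\<delta>\<close> cut out the same subset of the component of \<open>\<omega>\<^sub>0\<close> inside \<open>K \<otimes> \<complex>\<close>,
  then \<open>d\<^sub>K\<close> is a multiple of \<open>\<delta>\<^sub>K\<close>. Otherwise one first deforms \<open>\<omega>\<^sub>0\<close> inside the period
  domain onto a period of \<open>K \<otimes> \<complex>\<close> orthogonal to \<open>\<delta>\<close>, by shrinking its negative definite
  part, and then moves it off \<open>H\<^sub>d\<close> within \<open>K \<otimes> \<complex>\<close>, using that \<open>K\<close> has signature \<open>(2, 2)\<close>.
  So \<open>d\<^sub>K = c \<delta>\<^sub>K\<close> with \<open>c\<^sup>2 = -d\<^sub>K\<^sup>2 \<in> {0, 1}\<close>. The case \<open>c = 0\<close> would put the root \<open>d\<close> into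
  \<open>E = E8(2)\<close>, whose norms are divisible by 4. For \<open>c = \<plusminus>1\<close>, the \<open>E\<^sup>\<or>\<close>-components of
  \<open>d - c\<delta>\<close> and \<open>d + c\<delta>\<close> lie in \<open>E\<close> with norms adding up to \<open>-4\<close>, so one of them is 0,
  i.e. \<open>d = c\<delta>\<close> or \<open>d = -c I\<^sub>\<mu>\<delta>\<close>, as \<open>I\<^sub>\<mu>\<close> is \<open>-1\<close> on \<open>K\<close> and \<open>1\<close> on \<open>E\<close>.
  Conversely \<open>\<plusminus>\<delta>\<close> and \<open>\<plusminus>I\<^sub>\<mu>\<delta>\<close> pair with \<open>K\<close> like \<open>\<delta>\<close> up to sign.\<close>

section \<open>Bilinear forms given by Gram matrices\<close>

lemma bil_add_left: "bil n G (\<lambda>k. x k + y k) z = bil n G x z + bil n G y z"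
  unfolding bil_def by (simp add: algebra_simps sum.distrib)

lemma bil_add_right: "bil n G z (\<lambda>k. x k + y k) = bil n G z x + bil n G z y"
  unfolding bil_def by (simp add: algebra_simps sum.distrib)

lemma bil_diff_left: "bil n G (\<lambda>k. x k - y k) z = bil n G x z - bil n G y z"
  unfolding bil_def by (simp add: algebra_simps sum_subtractf)

lemma bil_diff_right: "bil n G z (\<lambda>k. x k - y k) = bil n G z x - bil n G z y"
  unfolding bil_def by (simp add: algebra_simps sum_subtractf)

lemma bil_scale_left: "bil n G (\<lambda>k. c * x k) z = c * bil n G x z"
  unfolding bil_def by (simp add: algebra_simps sum_distrib_left)

lemma bil_scale_right: "bil n G z (\<lambda>k. c * x k) = c * bil n G z x"
  unfolding bil_def by (simp add: algebra_simps sum_distrib_left)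

lemma bil_minus_left: "bil n G (\<lambda>k. - x k) z = - bil n G x z"
  using bil_scale_left[of n G "-1" x z] by simp

lemma bil_minus_right: "bil n G z (\<lambda>k. - x k) = - bil n G z x"
  using bil_scale_right[of n G z "-1" x] by simp

lemma bil_sum_left: "finite A \<Longrightarrow> bil n G (\<lambda>k. \<Sum>i\<in>A. f i k) z = (\<Sum>i\<in>A. bil n G (f i) z)"
  by (induct A rule: finite_induct) (simp_all add: bil_add_left, simp add: bil_def)

lemma bil_sum_right: "finite A \<Longrightarrow> bil n G z (\<lambda>k. \<Sum>i\<in>A. f i k) = (\<Sum>i\<in>A. bil n G z (f i))"
  by (induct A rule: finite_induct) (simp_all add: bil_add_right, simp add: bil_def)

lemma bil_commute: "(\<And>i j. G i j = G j i) \<Longrightarrow> bil n G x y = bil n G y x"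
  unfolding bil_def by (subst sum.swap) (simp add: algebra_simps)

lemma bil_ivec: "bil n G (ivec x) (ivec y) = (of_int (bil n G x y) :: 'a::comm_ring_1)"
  unfolding bil_def ivec_def by simp

lemma bil_of_real:
  "bil n G (\<lambda>k. complex_of_real (x k)) (\<lambda>k. complex_of_real (y k)) = complex_of_real (bil n G x y)"
  unfolding bil_def by simp

lemma gram_K3_commute: "gram_K3 i j = gram_K3 j i"
proof -
  have "e8_adj i j = e8_adj j i" for i j
    unfolding e8_adj_def by auto
  then have "gram_E8 i j = gram_E8 j i" for i j
    unfolding gram_E8_def by auto
  moreover have "gram_U i j = gram_U j i" for i j
    unfolding gram_U_def by auto
  ultimately show ?thesis
    unfolding gram_K3_def by auto
qed

lemma bK3_commute: "bK3 x y = bK3 y x"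
  by (rule bil_commute) (rule gram_K3_commute)

lemma bK3_norm_add:
  "bK3 (\<lambda>k. u k + v k) (\<lambda>k. u k + v k) = bK3 u u + 2 * bK3 u v + bK3 v (v :: nat \<Rightarrow> real)"
  by (simp add: bil_add_left bil_add_right bK3_commute[of v u])

lemma bK3_norm_lincomb:
  "bK3 (\<lambda>k. \<alpha> * u k + \<beta> * v k) (\<lambda>k. \<alpha> * u k + \<beta> * v k)
     = \<alpha>\<^sup>2 * bK3 u u + 2 * \<alpha> * \<beta> * bK3 u v + \<beta>\<^sup>2 * bK3 v (v :: nat \<Rightarrow> real)"
  by (simp add: bil_add_left bil_add_right bil_scale_left bil_scale_right bK3_commute[of v u]
      power2_eq_square algebra_simps)

lemma bK3_norm_plus_minus:
  "bK3 (\<lambda>k. u k + (- c) * v k) (\<lambda>k. u k + (- c) * v k) + bK3 (\<lambda>k. u k + c * v k) (\<lambda>k. u k + c * v k)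
     = 2 * bK3 u u + 2 * c\<^sup>2 * bK3 v (v :: nat \<Rightarrow> real)"
  using bK3_norm_lincomb[of 1 u "- c" v] bK3_norm_lincomb[of 1 u c v] by (simp add: power2_eq_square)

lemma ivec_int [simp]: "(ivec x :: nat \<Rightarrow> int) = x"
  unfolding ivec_def by simp

section \<open>A basis of type U(2) + U(2)\<close>

definition U2U2_basis :: "(nat \<Rightarrow> nat \<Rightarrow> int) \<Rightarrow> bool" where
  "U2U2_basis b \<longleftrightarrow> (\<forall>i<4. b i \<in> zvec 22) \<and> (\<forall>i<4. \<forall>j<4. bK3 (b i) (b j) = gram_U2U2 i j)"

definition Kcoords :: "(nat \<Rightarrow> nat \<Rightarrow> int) \<Rightarrow> (nat \<Rightarrow> 'a::comm_ring_1) \<Rightarrow> nat \<Rightarrow> 'a" where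
  "Kcoords b v j = bK3 (ivec (b j)) v"

definition Kcomb :: "(nat \<Rightarrow> nat \<Rightarrow> int) \<Rightarrow> (nat \<Rightarrow> 'a::comm_ring_1) \<Rightarrow> nat \<Rightarrow> 'a" where
  "Kcomb b c = (\<lambda>k. \<Sum>i<4. c i * ivec (b i) k)"

text \<open>The coefficients of the vector of \<open>K \<otimes> F\<close> pairing to \<open>g j\<close> with \<open>b j\<close>:
  the dual basis of \<open>U(2)\<close> is the hyperbolic basis with its two vectors swapped and halved.\<close>
definition dual_coeffs :: "(nat \<Rightarrow> 'a::field) \<Rightarrow> nat \<Rightarrow> 'a" where
  "dual_coeffs g i =
    (if i = 0 then g 1 / 2 else if i = 1 then g 0 / 2 else if i = 2 then g 3 / 2 else g 2 / 2)"

definition Kdual :: "(nat \<Rightarrow> nat \<Rightarrow> int) \<Rightarrow> (nat \<Rightarrow> 'a::field) \<Rightarrow> nat \<Rightarrow> 'a" where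
  "Kdual b g = Kcomb b (dual_coeffs g)"

text \<open>For \<open>v \<in> \<Lambda>\<close>, \<open>Kdual b (Kcoords b v)\<close> and \<open>Kperp b v\<close> are the components \<open>v\<^sub>K \<in> K\<^sup>\<or>\<close> and
  \<open>v\<^sub>E \<in> E\<^sup>\<or>\<close> of the statement.\<close>
definition Kperp :: "(nat \<Rightarrow> nat \<Rightarrow> int) \<Rightarrow> (nat \<Rightarrow> 'a::field_char_0) \<Rightarrow> nat \<Rightarrow> 'a" where
  "Kperp b v = (\<lambda>k. v k - Kdual b (Kcoords b v) k)"

text \<open>The forms of \<open>K\<^sup>\<or> \<cong> U(1/2) + U(1/2)\<close>, in the coordinates \<^const>\<open>Kcoords\<close>.\<close>
definition qK :: "(nat \<Rightarrow> 'a::comm_ring_1) \<Rightarrow> 'a" where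
  "qK g = g 0 * g 1 + g 2 * g 3"

definition bK :: "(nat \<Rightarrow> 'a::field) \<Rightarrow> (nat \<Rightarrow> 'a) \<Rightarrow> 'a" where
  "bK g h = (g 0 * h 1 + g 1 * h 0 + g 2 * h 3 + g 3 * h 2) / 2"

lemma sum_lessThan_4: "(\<Sum>i<(4::nat). f i) = f 0 + f 1 + f 2 + (f 3 :: 'a::comm_monoid_add)"
  by (simp add: eval_nat_numeral lessThan_Suc add.assoc add.commute add.left_commute)

lemma less_4_cases: "(i::nat) < 4 \<Longrightarrow> i = 0 \<or> i = 1 \<or> i = 2 \<or> i = 3"
  by auto

lemma bK_commute: "bK g h = bK h g"
  unfolding bK_def by (simp add: algebra_simps)

lemma bK_self: "bK g g = qK (g :: nat \<Rightarrow> 'a::field_char_0)"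
  unfolding bK_def qK_def by (simp add: field_simps)

lemma bK_add_left: "bK (\<lambda>j. u j + w j) v = bK u v + bK w (v :: nat \<Rightarrow> 'a::field_char_0)"
  unfolding bK_def by (simp add: field_simps)

lemma bK_scale_left: "bK (\<lambda>j. c * u j) v = c * bK u (v :: nat \<Rightarrow> 'a::field_char_0)"
  unfolding bK_def by (simp add: field_simps)

lemma bK_add_right: "bK g (\<lambda>j. u j + v j) = bK g u + bK g (v :: nat \<Rightarrow> 'a::field_char_0)"
  unfolding bK_def by (simp add: field_simps)

lemma bK_scale_right: "bK g (\<lambda>j. c * v j) = c * bK g (v :: nat \<Rightarrow> 'a::field_char_0)"
  unfolding bK_def by (simp add: field_simps)

lemma bK_cong: "(\<And>j. j < 4 \<Longrightarrow> h j = h' j) \<Longrightarrow> bK g h = bK g h'"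
  unfolding bK_def by simp

lemma qK_lincomb: "qK (\<lambda>j. u j + c * v j) = qK u + 2 * c * bK u v + c\<^sup>2 * qK (v :: nat \<Rightarrow> real)"
  unfolding qK_def bK_def by (simp add: power2_eq_square field_simps)

lemma qK_of_int: "qK (\<lambda>j. (of_int (f j) :: 'a::comm_ring_1)) = of_int (qK f)"
  unfolding qK_def by simp

lemma qK_scale: "qK (\<lambda>j. c * g j) = c\<^sup>2 * qK g"
  unfolding qK_def by (simp add: power2_eq_square algebra_simps)

lemma qK_odd_or_4_dvd:
  assumes "odd (qK (u :: nat \<Rightarrow> int))"
  shows "odd (qK (\<lambda>j. n * u j + 2 * t j)) \<or> 4 dvd qK (\<lambda>j. n * u j + 2 * t j)"
proof (cases "even n")
  case True
  then obtain m where "n = 2 * m" by auto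
  then have "qK (\<lambda>j. n * u j + 2 * t j) = 4 * qK (\<lambda>j. m * u j + t j)"
    unfolding qK_def by (simp add: algebra_simps)
  then show ?thesis by simp
next
  case False
  have "qK (\<lambda>j. n * u j + 2 * t j)
      = n * n * qK u + 2 * (n * (u 0 * t 1 + t 0 * u 1 + u 2 * t 3 + t 2 * u 3) + 2 * (t 0 * t 1 + t 2 * t 3))"
    unfolding qK_def by (simp add: algebra_simps)
  moreover have "odd (n * n * qK u)"
    using False assms by simp
  ultimately show ?thesis by simp
qed

text \<open>In the coordinates \<open>g\<^sub>0 \<plusminus> g\<^sub>1, g\<^sub>2 \<plusminus> g\<^sub>3\<close> the form \<^const>\<open>qK\<close> is
  \<open>(x\<^sub>1\<^sup>2 + x\<^sub>2\<^sup>2 - y\<^sub>1\<^sup>2 - y\<^sub>2\<^sup>2) / 4\<close>; in particular it has signature \<open>(2, 2)\<close>.\<close>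
lemma qK_sums_bound:
  fixes P Q :: "nat \<Rightarrow> real"
  assumes "qK Q = qK P" "bK P Q = 0"
  shows "4 * qK P * (\<alpha>\<^sup>2 + \<beta>\<^sup>2) \<le> (\<alpha> * (P 0 + P 1) + \<beta> * (Q 0 + Q 1))\<^sup>2 + (\<alpha> * (P 2 + P 3) + \<beta> * (Q 2 + Q 3))\<^sup>2"
proof -
  have "(\<alpha> * (P 0 + P 1) + \<beta> * (Q 0 + Q 1))\<^sup>2 + (\<alpha> * (P 2 + P 3) + \<beta> * (Q 2 + Q 3))\<^sup>2
        - 4 * (\<alpha>\<^sup>2 * qK P + 2 * \<alpha> * \<beta> * bK P Q + \<beta>\<^sup>2 * qK Q)
      = (\<alpha> * (P 0 - P 1) + \<beta> * (Q 0 - Q 1))\<^sup>2 + (\<alpha> * (P 2 - P 3) + \<beta> * (Q 2 - Q 3))\<^sup>2"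
    unfolding qK_def bK_def by (simp add: power2_eq_square algebra_simps)
  moreover have "0 \<le> (\<alpha> * (P 0 - P 1) + \<beta> * (Q 0 - Q 1))\<^sup>2 + (\<alpha> * (P 2 - P 3) + \<beta> * (Q 2 - Q 3))\<^sup>2"
    by simp
  ultimately show ?thesis
    using assms by (simp add: algebra_simps)
qed

lemma positive_plane_sums_independent:
  fixes P Q :: "nat \<Rightarrow> real"
  assumes s: "0 < qK P" and PQ: "qK Q = qK P" "bK P Q = 0"
  shows "(P 0 + P 1) * (Q 2 + Q 3) - (P 2 + P 3) * (Q 0 + Q 1) \<noteq> 0"
proof
  define p1 p2 q1 q2 where "p1 = P 0 + P 1" and "p2 = P 2 + P 3" and "q1 = Q 0 + Q 1" and "q2 = Q 2 + Q 3"
  note bound = qK_sums_bound[OF PQ, folded p1_def p2_def q1_def q2_def]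
  assume D: "(P 0 + P 1) * (Q 2 + Q 3) - (P 2 + P 3) * (Q 0 + Q 1) = 0"
  then have "q2 * p2 + - p2 * q2 = 0" "q2 * p1 + - p2 * q1 = 0"
    "q1 * p1 + - p1 * q1 = 0" "q1 * p2 + - p1 * q2 = 0"
    unfolding p1_def p2_def q1_def q2_def by (simp_all add: algebra_simps)
  then have "4 * qK P * (q2\<^sup>2 + p2\<^sup>2) \<le> 0" "4 * qK P * (q1\<^sup>2 + p1\<^sup>2) \<le> 0"
    using bound[of q2 "- p2"] bound[of q1 "- p1"] by simp_all
  then have "q2\<^sup>2 + p2\<^sup>2 \<le> 0" "q1\<^sup>2 + p1\<^sup>2 \<le> 0"
    using s by (simp_all add: mult_le_0_iff)
  then have "p1 = 0" "p2 = 0" "q1 = 0" "q2 = 0"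
    by (simp_all add: sum_power2_le_zero_iff)
  then show False
    using bound[of 1 0] s by simp
qed

lemma orth_positive_plane_nonneg_eq_0:
  fixes P Q g :: "nat \<Rightarrow> real"
  assumes s: "0 < qK P" and PQ: "qK Q = qK P" "bK P Q = 0"
    and g: "bK P g = 0" "bK Q g = 0" "0 \<le> qK g"
  shows "g 0 = 0 \<and> g 1 = 0 \<and> g 2 = 0 \<and> g 3 = 0"
proof -
  define p1 p2 q1 q2 where "p1 = P 0 + P 1" and "p2 = P 2 + P 3" and "q1 = Q 0 + Q 1" and "q2 = Q 2 + Q 3"
  define D where "D = p1 * q2 - p2 * q1"
  have D: "D \<noteq> 0"
    using positive_plane_sums_independent[OF s PQ] unfolding D_def p1_def p2_def q1_def q2_def .
  define a c where "a = ((g 0 + g 1) * q2 - (g 2 + g 3) * q1) / D" and "c = (p1 * (g 2 + g 3) - p2 * (g 0 + g 1)) / D"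
  define h where "h j = g j - a * P j - c * Q j" for j
  have "a * p1 + c * q1 = (g 0 + g 1) * D / D" "a * p2 + c * q2 = (g 2 + g 3) * D / D"
    unfolding a_def c_def D_def by (simp_all add: add_divide_distrib[symmetric] algebra_simps)
  then have "a * p1 + c * q1 = g 0 + g 1" "a * p2 + c * q2 = g 2 + g 3"
    using D by simp_all
  then have sums: "h 0 + h 1 = 0" "h 2 + h 3 = 0"
    unfolding h_def p1_def p2_def q1_def q2_def by (simp_all add: algebra_simps)
  have "qK h = qK g - 2 * a * bK P g - 2 * c * bK Q g + a\<^sup>2 * qK P + 2 * a * c * bK P Q + c\<^sup>2 * qK Q"
    unfolding h_def qK_def bK_def by (simp add: power2_eq_square field_simps)
  then have qK_h: "qK h = qK g + (a\<^sup>2 + c\<^sup>2) * qK P"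
    using g(1,2) PQ by (simp add: algebra_simps)
  have "4 * qK h = (h 0 + h 1)\<^sup>2 + (h 2 + h 3)\<^sup>2 - ((h 0 - h 1)\<^sup>2 + (h 2 - h 3)\<^sup>2)"
    unfolding qK_def by (simp add: power2_eq_square algebra_simps)
  then have "4 * qK h = - ((h 0 - h 1)\<^sup>2 + (h 2 - h 3)\<^sup>2)"
    using sums by simp
  moreover have "0 \<le> (a\<^sup>2 + c\<^sup>2) * qK P" "0 \<le> (h 0 - h 1)\<^sup>2 + (h 2 - h 3)\<^sup>2"
    using s by simp_all
  ultimately have "(a\<^sup>2 + c\<^sup>2) * qK P = 0" "(h 0 - h 1)\<^sup>2 + (h 2 - h 3)\<^sup>2 = 0"
    using qK_h g(3) by linarith+
  then have "a = 0" "c = 0" "h 0 - h 1 = 0" "h 2 - h 3 = 0"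
    using s by (simp_all add: sum_power2_eq_zero_iff)
  then show ?thesis
    using sums unfolding h_def by simp
qed

lemma Kcoords_add: "Kcoords b (\<lambda>k. x k + y k) = (\<lambda>j. Kcoords b x j + Kcoords b y j)"
  unfolding Kcoords_def by (simp add: bil_add_right)

lemma Kcoords_diff: "Kcoords b (\<lambda>k. x k - y k) = (\<lambda>j. Kcoords b x j - Kcoords b y j)"
  unfolding Kcoords_def by (simp add: bil_diff_right)

lemma Kcoords_scale: "Kcoords b (\<lambda>k. c * x k) = (\<lambda>j. c * Kcoords b x j)"
  unfolding Kcoords_def by (simp add: bil_scale_right)

lemma Kcoords_sum: "finite A \<Longrightarrow> Kcoords b (\<lambda>k. \<Sum>i\<in>A. f i k) = (\<lambda>j. \<Sum>i\<in>A. Kcoords b (f i) j)"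
  unfolding Kcoords_def by (simp add: bil_sum_right)

lemma Kcoords_ivec: "Kcoords b (ivec v) j = (of_int (Kcoords b v j) :: 'a::comm_ring_1)"
  unfolding Kcoords_def by (metis bil_ivec ivec_int)

lemma Kcomb_add: "Kcomb b (\<lambda>i. c i + d i) = (\<lambda>k. Kcomb b c k + Kcomb b d k)"
  unfolding Kcomb_def by (simp add: algebra_simps sum.distrib)

lemma Kcomb_scale: "Kcomb b (\<lambda>i. a * c i) = (\<lambda>k. a * Kcomb b c k)"
  unfolding Kcomb_def by (simp add: algebra_simps sum_distrib_left)

lemma Kcomb_sum: "Kcomb b (\<lambda>j. \<Sum>i\<in>A. g i j) = (\<lambda>k. \<Sum>i\<in>A. Kcomb b (g i) k)"
  unfolding Kcomb_def by (simp add: sum_distrib_right sum.swap[of _ A])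

lemma dual_coeffs_add: "dual_coeffs (\<lambda>i. g i + h i) = (\<lambda>i. dual_coeffs g i + dual_coeffs h i)"
  unfolding dual_coeffs_def by (auto simp: add_divide_distrib)

lemma dual_coeffs_scale: "dual_coeffs (\<lambda>i. a * g i) = (\<lambda>i. a * dual_coeffs g i)"
  unfolding dual_coeffs_def by auto

lemma dual_coeffs_sum: "dual_coeffs (\<lambda>j. \<Sum>i\<in>A. g i j) = (\<lambda>j. \<Sum>i\<in>A. dual_coeffs (g i) j)"
  unfolding dual_coeffs_def by (auto simp: sum_divide_distrib)

lemma Kdual_add: "Kdual b (\<lambda>i. g i + h i) = (\<lambda>k. Kdual b g k + Kdual b h k)"
  unfolding Kdual_def dual_coeffs_add Kcomb_add ..

lemma Kdual_scale: "Kdual b (\<lambda>i. a * g i) = (\<lambda>k. a * Kdual b g k)"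
  unfolding Kdual_def dual_coeffs_scale Kcomb_scale ..

lemma Kdual_sum: "Kdual b (\<lambda>j. \<Sum>i\<in>A. g i j) = (\<lambda>k. \<Sum>i\<in>A. Kdual b (g i) k)"
  unfolding Kdual_def dual_coeffs_sum Kcomb_sum ..

lemma Kdual_cong: "(\<And>j. j < 4 \<Longrightarrow> g j = h j) \<Longrightarrow> Kdual b g = Kdual b h"
  unfolding Kdual_def Kcomb_def dual_coeffs_def by (intro ext sum.cong) auto

lemma bK3_Kcomb_left: "bK3 (Kcomb b c) v = (\<Sum>i<4. c i * Kcoords b v i)"
  unfolding Kcomb_def Kcoords_def by (simp add: bil_sum_left bil_scale_left)

lemma bK3_Kdual_left: "bK3 (Kdual b g) v = bK g (Kcoords b v :: nat \<Rightarrow> 'a::field)"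
  unfolding Kdual_def bK3_Kcomb_left sum_lessThan_4 bK_def dual_coeffs_def by (simp add: field_simps)

lemma Kcoords_Kcomb:
  assumes "U2U2_basis b"
  shows "Kcoords b (Kcomb b c) 0 = 2 * c 1" "Kcoords b (Kcomb b c) 1 = 2 * c 0"
    "Kcoords b (Kcomb b c) 2 = 2 * c 3" "Kcoords b (Kcomb b c) 3 = 2 * c 2"
proof -
  have "Kcoords b (Kcomb b c) j = (\<Sum>i<4. c i * of_int (gram_U2U2 i j))" if "j < 4" for j
  proof -
    have "Kcoords b (Kcomb b c) j = bK3 (Kcomb b c) (ivec (b j))"
      unfolding Kcoords_def by (rule bK3_commute)
    also have "\<dots> = (\<Sum>i<4. c i * bK3 (ivec (b i)) (ivec (b j)))"
      unfolding bK3_Kcomb_left Kcoords_def by (simp add: bK3_commute)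
    also have "\<dots> = (\<Sum>i<4. c i * of_int (gram_U2U2 i j))"
      using assms that unfolding U2U2_basis_def by (intro sum.cong) (simp_all add: bil_ivec)
    finally show ?thesis .
  qed
  then show "Kcoords b (Kcomb b c) 0 = 2 * c 1" "Kcoords b (Kcomb b c) 1 = 2 * c 0"
    "Kcoords b (Kcomb b c) 2 = 2 * c 3" "Kcoords b (Kcomb b c) 3 = 2 * c 2"
    by (simp_all add: sum_lessThan_4 gram_U2U2_def gram_U_def mult.commute)
qed

lemma Kcoords_Kdual:
  assumes "U2U2_basis b" "j < 4"
  shows "Kcoords b (Kdual b g) j = (g j :: 'a::field_char_0)"
  using less_4_cases[OF assms(2)] Kcoords_Kcomb[OF assms(1), of "dual_coeffs g"]
  unfolding Kdual_def by (auto simp: dual_coeffs_def)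

lemma Kdual_Kcoords_Kcomb:
  assumes "U2U2_basis b"
  shows "Kdual b (Kcoords b (Kcomb b c)) = (Kcomb b c :: nat \<Rightarrow> 'a::field_char_0)"
proof -
  have "dual_coeffs (Kcoords b (Kcomb b c)) i = c i" if "i < 4" for i
    using less_4_cases[OF that] Kcoords_Kcomb[OF assms, of c] by (auto simp: dual_coeffs_def)
  then show ?thesis unfolding Kdual_def Kcomb_def by (intro ext sum.cong) auto
qed

lemma bK3_Kdual_Kdual:
  "U2U2_basis b \<Longrightarrow> bK3 (Kdual b g) (Kdual b h) = bK g (h :: nat \<Rightarrow> 'a::field_char_0)"
  unfolding bK3_Kdual_left by (rule bK_cong) (simp add: Kcoords_Kdual)

lemma bK3_Kdual_norm:
  "U2U2_basis b \<Longrightarrow> bK3 (Kdual b g) (Kdual b g) = qK (g :: nat \<Rightarrow> 'a::field_char_0)"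
  by (simp add: bK3_Kdual_Kdual bK_self)

lemma Kcoords_Kperp: "U2U2_basis b \<Longrightarrow> j < 4 \<Longrightarrow> Kcoords b (Kperp b v) j = 0"
  unfolding Kperp_def Kcoords_diff by (simp add: Kcoords_Kdual)

lemma Kperp_lincomb:
  "Kperp b (\<lambda>k. x k + c * y k) = (\<lambda>k. Kperp b x k + c * Kperp b y k :: 'a::field_char_0)"
  unfolding Kperp_def Kcoords_add Kcoords_scale Kdual_add Kdual_scale
  by (simp add: fun_eq_iff algebra_simps)

lemma Kperp_scale: "Kperp b (\<lambda>k. a * v k) = (\<lambda>k. a * Kperp b v k)"
  unfolding Kperp_def Kcoords_scale Kdual_scale by (simp add: algebra_simps)

lemma Kperp_sum:
  "finite A \<Longrightarrow> Kperp b (\<lambda>k. \<Sum>i\<in>A. c i * v i k) = (\<lambda>k. \<Sum>i\<in>A. c i * Kperp b (v i) k)"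
  unfolding Kperp_def
  by (simp add: Kcoords_sum Kcoords_scale Kdual_sum Kdual_scale sum_subtractf algebra_simps)

lemma bK3_Kdual_Kperp:
  assumes "U2U2_basis b"
  shows "bK3 (Kdual b g) (Kperp b v) = (0 :: 'a::field_char_0)"
proof -
  have "bK3 (Kdual b g) (Kperp b v) = bK g (\<lambda>j. 0)"
    unfolding bK3_Kdual_left by (rule bK_cong) (simp add: Kcoords_Kperp[OF assms])
  then show ?thesis
    by (simp add: bK_def)
qed

lemma bK3_norm_Kdual_Kperp:
  assumes "U2U2_basis b"
  shows "bK3 v v = qK (Kcoords b v) + bK3 (Kperp b v) (Kperp b (v :: nat \<Rightarrow> real))"
proof -
  have "v = (\<lambda>k. Kdual b (Kcoords b v) k + Kperp b v k)" unfolding Kperp_def by simp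
  then have "bK3 v v = bK3 (\<lambda>k. Kdual b (Kcoords b v) k + Kperp b v k) (\<lambda>k. Kdual b (Kcoords b v) k + Kperp b v k)"
    by simp
  also have "\<dots> = qK (Kcoords b v) + bK3 (Kperp b v) (Kperp b v)"
    unfolding bK3_norm_add bK3_Kdual_Kperp[OF assms] bK3_Kdual_norm[OF assms] by simp
  finally show ?thesis .
qed

section \<open>The negative definite lattice E8(2)\<close>

definition E8_2_basis :: "(nat \<Rightarrow> nat \<Rightarrow> int) \<Rightarrow> bool" where
  "E8_2_basis b \<longleftrightarrow> (\<forall>i<8. b i \<in> zvec 22) \<and> (\<forall>i<8. \<forall>j<8. bK3 (b i) (b j) = gram_E8_2 i j)"

definition Ecomb :: "(nat \<Rightarrow> nat \<Rightarrow> int) \<Rightarrow> (nat \<Rightarrow> 'a::comm_ring_1) \<Rightarrow> nat \<Rightarrow> 'a" where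
  "Ecomb b c = (\<lambda>k. \<Sum>i<8. c i * ivec (b i) k)"

definition E8_form :: "(nat \<Rightarrow> 'a::comm_ring_1) \<Rightarrow> 'a" where
  "E8_form r = (\<Sum>k<8. \<Sum>l<8. r k * r l * of_int (gram_E8 k l))"

lemma E8_form_expand:
  "E8_form r = - 2 * (r 0 * r 0 + r 1 * r 1 + r 2 * r 2 + r 3 * r 3 + r 4 * r 4 + r 5 * r 5 + r 6 * r 6 + r 7 * r 7)
     + 2 * (r 0 * r 2 + r 2 * r 3 + r 3 * r 4 + r 4 * r 5 + r 5 * r 6 + r 6 * r 7 + r 1 * r 3)"
proof -
  have "(\<Sum>i<(8::nat). f i) = f 0 + f 1 + f 2 + f 3 + f 4 + f 5 + f 6 + f 7" for f :: "nat \<Rightarrow> 'a"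
    by (simp add: eval_nat_numeral lessThan_Suc add.assoc add.commute add.left_commute)
  then show ?thesis
    unfolding E8_form_def by (simp add: gram_E8_def e8_adj_def algebra_simps)
qed

text \<open>Completing squares along the Dynkin diagram.\<close>
lemma E8_form_sum_squares:
  "- E8_form (r :: nat \<Rightarrow> real) = 2 * (r 0 - r 2 / 2)\<^sup>2 + 2 * (r 1 - r 3 / 2)\<^sup>2 + 2 * (r 7 - r 6 / 2)\<^sup>2
     + 3/2 * (r 6 - 2 * r 5 / 3)\<^sup>2 + 4/3 * (r 5 - 3 * r 4 / 4)\<^sup>2 + 3/2 * (r 2 - 2 * r 3 / 3)\<^sup>2
     + 5/4 * (r 4 - 4 * r 3 / 5)\<^sup>2 + 1/30 * (r 3)\<^sup>2"
  unfolding E8_form_expand by (simp add: power2_eq_square algebra_simps)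

lemma E8_form_nonpos: "E8_form (r :: nat \<Rightarrow> real) \<le> 0"
proof -
  have "0 \<le> - E8_form r"
    unfolding E8_form_sum_squares by (intro add_nonneg_nonneg mult_nonneg_nonneg) auto
  then show ?thesis by simp
qed

lemma E8_form_eq_0_imp_zero:
  assumes "E8_form (r :: nat \<Rightarrow> real) = 0" and "k < 8"
  shows "r k = 0"
proof -
  have "2 * (r 0 - r 2 / 2)\<^sup>2 + 2 * (r 1 - r 3 / 2)\<^sup>2 + 2 * (r 7 - r 6 / 2)\<^sup>2
     + 3/2 * (r 6 - 2 * r 5 / 3)\<^sup>2 + 4/3 * (r 5 - 3 * r 4 / 4)\<^sup>2 + 3/2 * (r 2 - 2 * r 3 / 3)\<^sup>2
     + 5/4 * (r 4 - 4 * r 3 / 5)\<^sup>2 + 1/30 * (r 3)\<^sup>2 = 0"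
    using E8_form_sum_squares[of r] assms(1) by simp
  moreover have nonneg: "0 \<le> (x::real)\<^sup>2" for x by simp
  ultimately have "(r 3)\<^sup>2 = 0" "(r 4 - 4 * r 3 / 5)\<^sup>2 = 0" "(r 2 - 2 * r 3 / 3)\<^sup>2 = 0"
    "(r 5 - 3 * r 4 / 4)\<^sup>2 = 0" "(r 6 - 2 * r 5 / 3)\<^sup>2 = 0" "(r 7 - r 6 / 2)\<^sup>2 = 0"
    "(r 1 - r 3 / 2)\<^sup>2 = 0" "(r 0 - r 2 / 2)\<^sup>2 = 0"
    using nonneg[of "r 3"] nonneg[of "r 4 - 4 * r 3 / 5"] nonneg[of "r 2 - 2 * r 3 / 3"]
      nonneg[of "r 5 - 3 * r 4 / 4"] nonneg[of "r 6 - 2 * r 5 / 3"] nonneg[of "r 7 - r 6 / 2"]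
      nonneg[of "r 1 - r 3 / 2"] nonneg[of "r 0 - r 2 / 2"]
    by linarith+
  then have "r 3 = 0" "r 4 = 0" "r 2 = 0" "r 5 = 0" "r 6 = 0" "r 7 = 0" "r 1 = 0" "r 0 = 0"
    by simp_all
  with assms(2) show ?thesis
    by (auto simp: less_Suc_eq numeral_eq_Suc)
qed

lemma bK3_Ecomb_norm:
  assumes "E8_2_basis b"
  shows "bK3 (Ecomb b r) (Ecomb b r) = 2 * E8_form r"
proof -
  have "bK3 (Ecomb b r) (Ecomb b r) = (\<Sum>i<8. \<Sum>j<8. r i * r j * bK3 (ivec (b i)) (ivec (b j)))"
    unfolding Ecomb_def
    by (simp add: bil_sum_left bil_sum_right bil_scale_left bil_scale_right sum_distrib_left mult.assoc)
  also have "\<dots> = (\<Sum>i<8. \<Sum>j<8. r i * r j * of_int (gram_E8_2 i j))"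
    using assms unfolding E8_2_basis_def by (intro sum.cong) (simp_all add: bil_ivec)
  also have "\<dots> = 2 * E8_form r"
    unfolding E8_form_def gram_E8_2_def by (simp add: sum_distrib_left algebra_simps)
  finally show ?thesis .
qed

lemma bK3_Ecomb_norm_nonpos: "E8_2_basis b \<Longrightarrow> bK3 (Ecomb b r) (Ecomb b (r :: nat \<Rightarrow> real)) \<le> 0"
  using bK3_Ecomb_norm[of b r] E8_form_nonpos[of r] by simp

lemma Ecomb_scale: "Ecomb b (\<lambda>i. a * c i) = (\<lambda>k. a * Ecomb b c k)"
  unfolding Ecomb_def by (simp add: algebra_simps sum_distrib_left)

lemma Ecomb_sum: "Ecomb b (\<lambda>j. \<Sum>i\<in>A. g i j) = (\<lambda>k. \<Sum>i\<in>A. Ecomb b (g i) k)"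
  unfolding Ecomb_def by (simp add: sum_distrib_right sum.swap[of _ A])

lemma lat_span_8_Ecomb:
  "z \<in> lat_span 8 b \<Longrightarrow> \<exists>c. (ivec z :: nat \<Rightarrow> 'a::comm_ring_1) = Ecomb b (\<lambda>i. of_int (c i))
      \<and> z = (\<lambda>k. \<Sum>i<8. c i * b i k)"
  unfolding lat_span_def Ecomb_def ivec_def by auto

lemma E8_2_lattice_norm:
  assumes "E8_2_basis b" "z \<in> lat_span 8 b"
  shows "4 dvd bK3 z z" "bK3 z z \<le> 0" "bK3 z z = 0 \<Longrightarrow> z = 0"
proof -
  obtain c where c: "(ivec z :: nat \<Rightarrow> real) = Ecomb b (\<lambda>i. of_int (c i))" "z = (\<lambda>k. \<Sum>i<8. c i * b i k)"
    using lat_span_8_Ecomb[OF assms(2)] by blast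
  have of_int_E8_form: "E8_form (\<lambda>k. real_of_int (c k)) = real_of_int (E8_form c)"
    unfolding E8_form_def by simp
  have "real_of_int (bK3 z z) = bK3 (ivec z) (ivec z :: nat \<Rightarrow> real)"
    by (simp add: bil_ivec)
  also have "\<dots> = 2 * E8_form (\<lambda>i. real_of_int (c i))"
    unfolding c(1) by (rule bK3_Ecomb_norm[OF assms(1)])
  finally have eq: "bK3 z z = 2 * E8_form c"
    unfolding of_int_E8_form by linarith
  have "even (E8_form c)"
    unfolding E8_form_expand by simp
  then show "4 dvd bK3 z z"
    using eq by auto
  show "bK3 z z \<le> 0"
    using eq E8_form_nonpos[of "\<lambda>i. real_of_int (c i)"] unfolding of_int_E8_form by linarith
  assume "bK3 z z = 0"
  then have "E8_form (\<lambda>i. real_of_int (c i)) = 0"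
    using eq unfolding of_int_E8_form by simp
  then have "\<forall>k<8. c k = 0"
    using E8_form_eq_0_imp_zero by fastforce
  then show "z = 0"
    unfolding c(2) by (simp add: fun_eq_iff)
qed

lemma lat_span_add: "x \<in> lat_span m b \<Longrightarrow> y \<in> lat_span m b \<Longrightarrow> (\<lambda>k. x k + y k) \<in> lat_span m b"
proof -
  assume "x \<in> lat_span m b" "y \<in> lat_span m b"
  then obtain c d where "x = (\<lambda>k. \<Sum>i<m. c i * b i k)" "y = (\<lambda>k. \<Sum>i<m. d i * b i k)"
    unfolding lat_span_def by auto
  then have "(\<lambda>k. x k + y k) = (\<lambda>k. \<Sum>i<m. (c i + d i) * b i k)"
    by (simp add: algebra_simps sum.distrib)
  then show ?thesis unfolding lat_span_def by auto
qed

lemma lat_span_scale: "x \<in> lat_span m b \<Longrightarrow> (\<lambda>k. a * x k) \<in> lat_span m b"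
proof -
  assume "x \<in> lat_span m b"
  then obtain c where "x = (\<lambda>k. \<Sum>i<m. c i * b i k)"
    unfolding lat_span_def by auto
  then have "(\<lambda>k. a * x k) = (\<lambda>k. \<Sum>i<m. (a * c i) * b i k)"
    by (simp add: algebra_simps sum_distrib_left)
  then show ?thesis unfolding lat_span_def by auto
qed

lemma lat_span_diff: "x \<in> lat_span m b \<Longrightarrow> y \<in> lat_span m b \<Longrightarrow> (\<lambda>k. x k - y k) \<in> lat_span m b"
  using lat_span_add[of x m b "\<lambda>k. (-1) * y k"] lat_span_scale[of y m b "-1"] by simp

lemma lat_span_basis:
  assumes "i < m"
  shows "b i \<in> lat_span m b"
proof -
  have "(\<Sum>j<m. (if j = i then 1 else 0) * b j k) = b i k" for k
  proof -
    have "(\<Sum>j<m. (if j = i then 1 else 0) * b j k) = (\<Sum>j<m. if i = j then b j k else 0)"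
      by (rule sum.cong) auto
    then show ?thesis using assms by simp
  qed
  then show ?thesis
    unfolding lat_span_def by (intro CollectI exI[of _ "\<lambda>j. if j = i then 1 else 0"]) auto
qed

lemma lat_span_zvec: "\<forall>i<m. b i \<in> zvec n \<Longrightarrow> x \<in> lat_span m b \<Longrightarrow> x \<in> zvec n"
  unfolding lat_span_def zvec_def by auto

definition lin_span :: "(nat \<Rightarrow> int) set \<Rightarrow> (nat \<Rightarrow> 'a::comm_ring_1) set" where
  "lin_span S = {(\<lambda>k. \<Sum>i<n. c i * of_int (w i k)) | (n::nat) c w. \<forall>i<n. w i \<in> S}"

lemma cx_span_eq_lin_span: "cx_span S = lin_span S"
  unfolding cx_span_def lin_span_def ..

lemma lin_spanI: "\<forall>i<(n::nat). w i \<in> S \<Longrightarrow> (\<lambda>k. \<Sum>i<n. c i * of_int (w i k)) \<in> lin_span S"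
  unfolding lin_span_def by blast

lemma lin_span_ivec: "v \<in> S \<Longrightarrow> ivec v \<in> lin_span S"
  using lin_spanI[of 1 "\<lambda>_. v" S "\<lambda>_. 1"] by (simp add: ivec_def)

lemma lin_span_add:
  assumes "u \<in> lin_span S" "v \<in> lin_span S"
  shows "(\<lambda>k. u k + v k) \<in> lin_span S"
proof -
  obtain n :: nat and c w where u: "u = (\<lambda>k. \<Sum>i<n. c i * of_int (w i k))" "\<forall>i<n. w i \<in> S"
    using assms(1) unfolding lin_span_def by auto
  obtain m :: nat and c' w' where v: "v = (\<lambda>k. \<Sum>i<m. c' i * of_int (w' i k))" "\<forall>i<m. w' i \<in> S"
    using assms(2) unfolding lin_span_def by auto
  define C where "C i = (if i < n then c i else c' (i - n))" for i
  define W where "W i = (if i < n then w i else w' (i - n))" for i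
  have split: "(\<Sum>i<n + m. f i) = (\<Sum>i<n. f i) + (\<Sum>i<m. f (i + n))" for f :: "nat \<Rightarrow> 'a"
    by (induct m) (simp_all add: add.commute add.left_commute)
  have "(\<lambda>k. u k + v k) = (\<lambda>k. \<Sum>i<n + m. C i * of_int (W i k))"
    unfolding split u v C_def W_def by simp
  moreover have "\<forall>i<n + m. W i \<in> S"
    using u(2) v(2) unfolding W_def by auto
  ultimately show ?thesis by (simp add: lin_spanI)
qed

lemma lin_span_scale:
  assumes "u \<in> lin_span S"
  shows "(\<lambda>k. a * u k) \<in> lin_span S"
proof -
  obtain n :: nat and c w where u: "u = (\<lambda>k. \<Sum>i<n. c i * of_int (w i k))" "\<forall>i<n. w i \<in> S"
    using assms unfolding lin_span_def by auto
  have "(\<lambda>k. a * u k) = (\<lambda>k. \<Sum>i<n. (a * c i) * of_int (w i k))"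
    unfolding u by (simp add: sum_distrib_left mult.assoc)
  then show ?thesis using u(2) by (simp add: lin_spanI)
qed

lemma lin_span_lincomb:
  "u \<in> lin_span S \<Longrightarrow> v \<in> lin_span S \<Longrightarrow> (\<lambda>k. u k + c * v k) \<in> lin_span S"
  by (intro lin_span_add lin_span_scale)

lemma lin_span_mono: "S \<subseteq> T \<Longrightarrow> lin_span S \<subseteq> lin_span T"
  unfolding lin_span_def by blast

lemma lin_span_map_coeffs:
  assumes "u \<in> lin_span S" and "\<And>x y. f (x + y) = f x + f y" "f 0 = 0" "\<And>x n. f (x * of_int n) = f x * of_int n"
  shows "(\<lambda>k. f (u k)) \<in> lin_span S"
proof -
  obtain n :: nat and c w where u: "u = (\<lambda>k. \<Sum>i<n. c i * of_int (w i k))" "\<forall>i<n. w i \<in> S"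
    using assms(1) unfolding lin_span_def by auto
  have "f (\<Sum>i\<in>A. c i * of_int (w i k)) = (\<Sum>i\<in>A. f (c i) * of_int (w i k))" if "finite A" for A k
    using that by induct (simp_all add: assms(2-4))
  then have "(\<lambda>k. f (u k)) = (\<lambda>k. \<Sum>i<n. f (c i) * of_int (w i k))"
    unfolding u by simp
  then show ?thesis using u(2) by (simp add: lin_spanI)
qed

lemma lin_span_of_real: "u \<in> lin_span S \<Longrightarrow> (\<lambda>k. complex_of_real (u k)) \<in> lin_span S"
  by (rule lin_span_map_coeffs) simp_all

lemma lin_span_Re: "u \<in> lin_span S \<Longrightarrow> (\<lambda>k. Re (u k)) \<in> lin_span S"
  by (rule lin_span_map_coeffs) simp_all

lemma lin_span_Im: "u \<in> lin_span S \<Longrightarrow> (\<lambda>k. Im (u k)) \<in> lin_span S"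
  by (rule lin_span_map_coeffs) simp_all

lemma lin_span_Kdual: "U2U2_basis b \<Longrightarrow> K = lat_span 4 b \<Longrightarrow> Kdual b g \<in> lin_span K"
  unfolding Kdual_def Kcomb_def ivec_def by (rule lin_spanI) (simp add: lat_span_basis)

section \<open>The decomposition \<open>\<Lambda> \<subseteq> K\<^sup>\<or> \<oplus> E\<^sup>\<or>\<close>\<close>

locale lattice_frame =
  fixes b bE bL :: "nat \<Rightarrow> nat \<Rightarrow> int" and K Lam :: "(nat \<Rightarrow> int) set"
  assumes K_basis: "U2U2_basis b" and K_eq: "K = lat_span 4 b"
    and Lam_eq: "Lam = lat_span 12 bL" and Lam_basis_zvec: "\<forall>i<12. bL i \<in> zvec 22"
    and K_subset: "K \<subseteq> Lam"
    and E_basis: "E8_2_basis bE" and E_eq: "orth_in Lam K = lat_span 8 bE"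
begin

lemma Lam_add: "v \<in> Lam \<Longrightarrow> w \<in> Lam \<Longrightarrow> (\<lambda>k. v k + w k) \<in> Lam"
  unfolding Lam_eq by (rule lat_span_add)

lemma Lam_scale: "v \<in> Lam \<Longrightarrow> (\<lambda>k. a * v k) \<in> Lam"
  unfolding Lam_eq by (rule lat_span_scale)

lemma Lam_diff: "v \<in> Lam \<Longrightarrow> w \<in> Lam \<Longrightarrow> (\<lambda>k. v k - w k) \<in> Lam"
  unfolding Lam_eq by (rule lat_span_diff)

lemma Lam_zvec: "v \<in> Lam \<Longrightarrow> v \<in> zvec 22"
  unfolding Lam_eq by (rule lat_span_zvec[OF Lam_basis_zvec])

lemma K_basis_in_K: "j < 4 \<Longrightarrow> b j \<in> K"
  unfolding K_eq by (rule lat_span_basis)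

lemma K_elem_Kcomb: "k \<in> K \<Longrightarrow> \<exists>c. k = Kcomb b c"
  unfolding K_eq lat_span_def Kcomb_def by auto

lemma Kcoords_K_even:
  assumes "k \<in> K" "j < 4"
  shows "even (Kcoords b k j)"
proof -
  obtain c where "k = Kcomb b c"
    using K_elem_Kcomb[OF assms(1)] by blast
  then show ?thesis
    using less_4_cases[OF assms(2)] Kcoords_Kcomb[OF K_basis, of c] by auto
qed

lemma Kdual_Kcoords_K: "k \<in> K \<Longrightarrow> Kdual b (Kcoords b (ivec k)) = (ivec k :: nat \<Rightarrow> 'a::field_char_0)"
proof -
  assume "k \<in> K"
  then obtain c where "k = Kcomb b c" using K_elem_Kcomb by blast
  then have "ivec k = Kcomb b (\<lambda>i. of_int (c i) :: 'a)"
    unfolding Kcomb_def ivec_def by simp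
  then show ?thesis using Kdual_Kcoords_Kcomb[OF K_basis] by metis
qed

lemma orth_K_iff: "(\<forall>y\<in>K. bK3 z y = 0) \<longleftrightarrow> (\<forall>j<4. Kcoords b z j = 0)"
proof
  assume "\<forall>y\<in>K. bK3 z y = 0"
  then show "\<forall>j<4. Kcoords b z j = 0"
    unfolding Kcoords_def by (metis K_basis_in_K ivec_int bK3_commute)
next
  assume coords: "\<forall>j<4. Kcoords b z j = 0"
  show "\<forall>y\<in>K. bK3 z y = 0"
  proof
    fix y assume "y \<in> K"
    then obtain c where "y = Kcomb b c" using K_elem_Kcomb by blast
    then show "bK3 z y = 0"
      using coords by (simp add: bK3_commute[of z] bK3_Kcomb_left)
  qed
qed

lemma Kcoords_orth: "z \<in> orth_in Lam K \<Longrightarrow> j < 4 \<Longrightarrow> Kcoords b z j = 0"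
  using orth_K_iff unfolding orth_in_def by auto

lemma Kcoords_q_span_orth: "w \<in> q_span (orth_in Lam K) \<Longrightarrow> j < 4 \<Longrightarrow> Kcoords b w j = 0"
proof -
  assume "w \<in> q_span (orth_in Lam K)" "j < 4"
  then obtain n s where ns: "n \<noteq> 0" "s \<in> orth_in Lam K" "(\<lambda>k. of_int n * w k) = ivec s"
    unfolding q_span_def by auto
  have "of_int n * Kcoords b w j = Kcoords b (ivec s) j"
    using ns(3) Kcoords_scale[of b "of_int n" w] by metis
  also have "\<dots> = 0"
    using Kcoords_orth[OF ns(2) \<open>j < 4\<close>] by (simp add: Kcoords_ivec)
  finally show ?thesis using ns(1) by simp
qed

lemma Kdual_Kcoords_q_span_K: "w \<in> q_span K \<Longrightarrow> w = Kdual b (Kcoords b w)"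
proof -
  assume "w \<in> q_span K"
  then obtain n s where ns: "n \<noteq> 0" "s \<in> K" "(\<lambda>k. of_int n * w k) = ivec s"
    unfolding q_span_def by auto
  have "Kdual b (Kcoords b (\<lambda>k. of_int n * w k)) = (\<lambda>k. of_int n * w k)"
    unfolding ns(3) by (rule Kdual_Kcoords_K[OF ns(2)])
  then show ?thesis
    using ns(1) unfolding Kcoords_scale Kdual_scale by (simp add: fun_eq_iff)
qed

lemma Kperp_K_orth_sum:
  assumes "k \<in> K" "z \<in> orth_in Lam K"
  shows "Kperp b (ivec (\<lambda>i. k i + z i)) = (ivec z :: nat \<Rightarrow> 'a::field_char_0)"
proof -
  have "Kcoords b (ivec z :: nat \<Rightarrow> 'a) j = 0" if "j < 4" for j
    using Kcoords_orth[OF assms(2) that] by (simp add: Kcoords_ivec)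
  then have "Kdual b (Kcoords b (ivec (\<lambda>i. k i + z i) :: nat \<Rightarrow> 'a)) = Kdual b (Kcoords b (ivec k))"
    by (intro Kdual_cong) (simp add: ivec_def Kcoords_add)
  then show ?thesis
    unfolding Kperp_def Kdual_Kcoords_K[OF assms(1)] by (simp add: ivec_def)
qed

text \<open>The form on \<open>K\<close> is \<open>U(2) \<oplus> U(2)\<close>, so even pairings against \<open>K\<close> are realised by a
  vector of \<open>K\<close>.\<close>
lemma Lam_even_decomp:
  assumes "v \<in> Lam" "\<forall>j<4. even (Kcoords b v j)"
  shows "\<exists>k\<in>K. \<exists>z\<in>orth_in Lam K. v = (\<lambda>i. k i + z i)"
proof -
  define c where "c i = (if i = 0 then Kcoords b v 1 else if i = 1 then Kcoords b v 0
      else if i = 2 then Kcoords b v 3 else Kcoords b v 2) div 2" for i :: nat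
  define k where "k = Kcomb b c"
  have k: "k \<in> K"
    unfolding k_def K_eq Kcomb_def lat_span_def by auto
  have "Kcoords b k j = Kcoords b v j" if "j < 4" for j
    using less_4_cases[OF that] Kcoords_Kcomb[OF K_basis, of c] assms(2) unfolding k_def c_def by auto
  then have "\<forall>j<4. Kcoords b (\<lambda>i. v i - k i) j = 0"
    by (simp add: Kcoords_diff)
  moreover have "(\<lambda>i. v i - k i) \<in> Lam"
    using assms(1) k K_subset by (intro Lam_diff) auto
  ultimately have "(\<lambda>i. v i - k i) \<in> orth_in Lam K"
    using orth_K_iff unfolding orth_in_def by blast
  with k show ?thesis by (intro bexI[of _ k] bexI[of _ "\<lambda>i. v i - k i"]) auto
qed

lemma Kperp_Lam_in_E_span: "w \<in> Lam \<Longrightarrow> \<exists>R. Kperp b (ivec w) = (Ecomb bE R :: nat \<Rightarrow> real)"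
proof -
  assume w: "w \<in> Lam"
  have "\<forall>j<4. even (Kcoords b (\<lambda>i. 2 * w i) j)"
    by (simp add: Kcoords_scale)
  then obtain k z where kz: "k \<in> K" "z \<in> orth_in Lam K" "(\<lambda>i. 2 * w i) = (\<lambda>i. k i + z i)"
    using Lam_even_decomp[OF Lam_scale[OF w]] by blast
  obtain c where c: "(ivec z :: nat \<Rightarrow> real) = Ecomb bE (\<lambda>i. of_int (c i))"
    using lat_span_8_Ecomb[of z bE] kz(2) E_eq by auto
  have "(\<lambda>k. 2 * Kperp b (ivec w) k) = Kperp b (ivec (\<lambda>i. 2 * w i) :: nat \<Rightarrow> real)"
    unfolding Kperp_scale[symmetric] by (simp add: ivec_def)
  also have "\<dots> = ivec z"
    unfolding kz(3) by (rule Kperp_K_orth_sum[OF kz(1,2)])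
  finally have two: "(\<lambda>k. 2 * Kperp b (ivec w) k) = (ivec z :: nat \<Rightarrow> real)" .
  have "Kperp b (ivec w) = (\<lambda>k. (1/2) * (ivec z k :: real))"
    unfolding two[symmetric] by simp
  also have "\<dots> = Ecomb bE (\<lambda>i. (1/2) * of_int (c i))"
    unfolding c Ecomb_scale ..
  finally show ?thesis by blast
qed

lemma Kperp_lin_span_in_E_span: "v \<in> lin_span Lam \<Longrightarrow> \<exists>R. Kperp b v = (Ecomb bE R :: nat \<Rightarrow> real)"
proof -
  assume "v \<in> lin_span Lam"
  then obtain n :: nat and c w where v: "v = (\<lambda>k. \<Sum>i<n. c i * of_int (w i k))" "\<forall>i<n. w i \<in> Lam"
    unfolding lin_span_def by auto
  have "\<forall>i\<in>{..<n}. \<exists>R. Kperp b (ivec (w i)) = (Ecomb bE R :: nat \<Rightarrow> real)"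
    using Kperp_Lam_in_E_span v(2) by auto
  then obtain R where R: "\<forall>i\<in>{..<n}. Kperp b (ivec (w i)) = (Ecomb bE (R i) :: nat \<Rightarrow> real)"
    by metis
  have "Kperp b v = (\<lambda>k. \<Sum>i<n. c i * Kperp b (ivec (w i)) k)"
    unfolding v(1) using Kperp_sum[of "{..<n}" b c "\<lambda>i. ivec (w i)"] by (simp add: ivec_def)
  also have "\<dots> = Ecomb bE (\<lambda>l. \<Sum>i<n. c i * R i l)"
    using R by (simp add: Ecomb_sum Ecomb_scale)
  finally show ?thesis by blast
qed

lemma Kperp_norm_nonpos: "v \<in> lin_span Lam \<Longrightarrow> bK3 (Kperp b v) (Kperp b (v :: nat \<Rightarrow> real)) \<le> 0"
  using Kperp_lin_span_in_E_span bK3_Ecomb_norm_nonpos[OF E_basis] by metis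

lemma Lam_norm_split:
  assumes "v \<in> Lam"
  shows "real_of_int (bK3 v v) = real_of_int (qK (Kcoords b v)) + bK3 (Kperp b (ivec v)) (Kperp b (ivec v))"
proof -
  have "real_of_int (bK3 v v) = bK3 (ivec v) (ivec v :: nat \<Rightarrow> real)"
    by (simp add: bil_ivec)
  also have "\<dots> = qK (Kcoords b (ivec v :: nat \<Rightarrow> real)) + bK3 (Kperp b (ivec v)) (Kperp b (ivec v))"
    by (rule bK3_norm_Kdual_Kperp[OF K_basis])
  also have "qK (Kcoords b (ivec v :: nat \<Rightarrow> real)) = real_of_int (qK (Kcoords b v))"
    using qK_of_int[of "Kcoords b v"] by (simp add: Kcoords_ivec[abs_def])
  finally show ?thesis .
qed

lemma Kdual_in_lin_span_Lam: "Kdual b g \<in> lin_span Lam"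
  using lin_span_Kdual[OF K_basis K_eq] lin_span_mono[OF K_subset] by blast

lemma Kcoords_lat_dual_K_odd:
  assumes d1: "d1 \<in> lat_dual K" and odd_d1: "bK3 d1 d1 = of_int (2 * m + 1)"
  obtains u where "\<And>j. j < 4 \<Longrightarrow> of_int (u j) = Kcoords b d1 j" and "odd (qK u)"
proof
  define u where "u j = \<lfloor>Kcoords b d1 j\<rfloor>" for j
  show u: "of_int (u j) = Kcoords b d1 j" if "j < 4" for j
  proof -
    have "bK3 d1 (ivec (b j)) \<in> \<int>"
      using d1 K_basis_in_K[OF that] unfolding lat_dual_def by auto
    then show ?thesis
      unfolding u_def Kcoords_def by (metis bK3_commute floor_of_int Ints_cases)
  qed
  have "d1 = Kdual b (Kcoords b d1)"
    using d1 Kdual_Kcoords_q_span_K unfolding lat_dual_def by blast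
  then have "bK3 d1 d1 = qK (Kcoords b d1)"
    by (metis bK3_Kdual_norm[OF K_basis])
  also have "\<dots> = of_int (qK u)"
    unfolding qK_def using u by simp
  finally have "of_int (2 * m + 1) = (of_int (qK u) :: rat)"
    using odd_d1 by simp
  then show "odd (qK u)"
    by (simp only: of_int_eq_iff) presburger
qed

text \<open>Every vector of \<open>\<Lambda>\<close> is \<open>n (d\<^sub>1 + d\<^sub>2)\<close> modulo \<open>K \<oplus> E\<close>, so its \<open>K\<close>-coordinates
  are \<open>n\<close> times those of \<open>d\<^sub>1\<close> plus even numbers.\<close>
lemma qK_Kcoords_Lam_odd_or_4_dvd:
  assumes d1: "d1 \<in> lat_dual K" and d2: "d2 \<in> lat_dual (orth_in Lam K)"
    and patch: "ivec ` Lam = {(\<lambda>k. of_int n * (d1 k + d2 k) + of_int (x k) + of_int (y k)) | n x y.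
                              x \<in> K \<and> y \<in> orth_in Lam K}"
    and odd_d1: "bK3 d1 d1 = of_int (2 * m + 1)"
    and v: "v \<in> Lam"
  shows "odd (qK (Kcoords b v)) \<or> 4 dvd qK (Kcoords b v)"
proof -
  obtain u where u: "\<And>j. j < 4 \<Longrightarrow> of_int (u j) = Kcoords b d1 j" and "odd (qK u)"
    using Kcoords_lat_dual_K_odd[OF d1 odd_d1] by blast
  have "(ivec v :: nat \<Rightarrow> rat) \<in> ivec ` Lam"
    using v by blast
  then obtain n x y where nxy: "x \<in> K" "y \<in> orth_in Lam K"
    "(ivec v :: nat \<Rightarrow> rat) = (\<lambda>k. of_int n * (d1 k + d2 k) + of_int (x k) + of_int (y k))"
    unfolding patch by blast
  define t where "t j = Kcoords b x j div 2" for j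
  have "Kcoords b v j = n * u j + 2 * t j" if j: "j < 4" for j
  proof -
    have "(of_int (Kcoords b v j) :: rat) = Kcoords b (ivec v) j"
      by (simp add: Kcoords_ivec)
    also have "\<dots> = of_int n * (Kcoords b d1 j + Kcoords b d2 j) + Kcoords b (ivec x) j + Kcoords b (ivec y) j"
      unfolding nxy(3) Kcoords_add Kcoords_scale by (simp add: ivec_def algebra_simps)
    also have "\<dots> = of_int (n * u j + Kcoords b x j)"
      using u[OF j] Kcoords_q_span_orth[OF _ j, of d2] d2 Kcoords_orth[OF nxy(2) j]
      unfolding lat_dual_def by (simp add: Kcoords_ivec)
    finally have "Kcoords b v j = n * u j + Kcoords b x j"
      by (simp only: of_int_eq_iff)
    then show ?thesis
      using Kcoords_K_even[OF nxy(1) j] unfolding t_def by simp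
  qed
  then have "qK (Kcoords b v) = qK (\<lambda>j. n * u j + 2 * t j)"
    unfolding qK_def by simp
  then show ?thesis
    using qK_odd_or_4_dvd[OF \<open>odd (qK u)\<close>] by simp
qed

lemma qK_Kcoords_neg:
  assumes "\<delta>K \<in> lat_dual K" "\<delta>E \<in> lat_dual (orth_in Lam K)" "ivec \<delta> = \<delta>K + \<delta>E" "bK3 \<delta>K \<delta>K < 0"
  shows "qK (Kcoords b \<delta>) < 0"
proof -
  have "Kcoords b \<delta>K j = of_int (Kcoords b \<delta> j)" if "j < 4" for j
  proof -
    have "\<delta>K = (\<lambda>k. ivec \<delta> k - \<delta>E k)"
      using assms(3) by (auto simp: fun_eq_iff)
    then have "Kcoords b \<delta>K j = Kcoords b (ivec \<delta>) j - Kcoords b \<delta>E j"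
      by (metis Kcoords_diff)
    then show ?thesis
      using Kcoords_q_span_orth[OF _ that] assms(2) unfolding lat_dual_def by (simp add: Kcoords_ivec)
  qed
  then have "qK (Kcoords b \<delta>K) = of_int (qK (Kcoords b \<delta>))"
    unfolding qK_def by simp
  moreover have "\<delta>K = Kdual b (Kcoords b \<delta>K)"
    using assms(1) Kdual_Kcoords_q_span_K unfolding lat_dual_def by blast
  then have "bK3 \<delta>K \<delta>K = qK (Kcoords b \<delta>K)"
    by (metis bK3_Kdual_norm[OF K_basis])
  ultimately show ?thesis using assms(4) by simp
qed

lemma involution_K_orth_sum:
  assumes I: "isometry_K3 I" "{x \<in> zvec 22. I x = - x} = K"
      "{x \<in> zvec 22. I x = x} = {x \<in> zvec 22. \<forall>y\<in>K. bK3 x y = 0}"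
    and kz: "k \<in> K" "z \<in> orth_in Lam K"
  shows "I (\<lambda>i. k i + z i) = (\<lambda>i. z i - k i)"
proof -
  have zvec: "k \<in> zvec 22" "z \<in> zvec 22"
    using kz K_subset unfolding orth_in_def by (auto intro: Lam_zvec)
  have "I (k + z) = I k + I z"
    using I(1) zvec unfolding isometry_K3_def by blast
  also have "I k = - k"
    using I(2) kz(1) zvec(1) by blast
  also have "I z = z"
    using I(3) kz(2) zvec(2) unfolding orth_in_def by blast
  finally show ?thesis
    by (simp add: plus_fun_def fun_eq_iff)
qed

lemma involution_ivec:
  assumes I: "isometry_K3 I" "{x \<in> zvec 22. I x = - x} = K"
      "{x \<in> zvec 22. I x = x} = {x \<in> zvec 22. \<forall>y\<in>K. bK3 x y = 0}"
    and \<delta>: "\<delta> \<in> Lam"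
  shows "(ivec (I \<delta>) :: nat \<Rightarrow> real) = (\<lambda>k. Kperp b (ivec \<delta>) k - Kdual b (Kcoords b (ivec \<delta>)) k)"
proof -
  have "\<forall>j<4. even (Kcoords b (\<lambda>i. 2 * \<delta> i) j)"
    by (simp add: Kcoords_scale)
  then obtain k z where kz: "k \<in> K" "z \<in> orth_in Lam K" and two_\<delta>: "(\<lambda>i. 2 * \<delta> i) = (\<lambda>i. k i + z i)"
    using Lam_even_decomp[OF Lam_scale[OF \<delta>]] by blast
  have "I (\<delta> + \<delta>) = I \<delta> + I \<delta>"
    using I(1) Lam_zvec[OF \<delta>] unfolding isometry_K3_def by blast
  moreover have "\<delta> + \<delta> = (\<lambda>i. k i + z i)"
  proof
    fix i
    show "(\<delta> + \<delta>) i = k i + z i"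
      using fun_cong[OF two_\<delta>, of i] by simp
  qed
  ultimately have I\<delta>_sum: "I \<delta> + I \<delta> = (\<lambda>i. z i - k i)"
    using involution_K_orth_sum[OF I kz] by simp
  have I\<delta>: "2 * (ivec (I \<delta>) i :: real) = ivec z i - ivec k i" for i
  proof -
    have "real_of_int (2 * I \<delta> i) = real_of_int (z i - k i)"
      using fun_cong[OF I\<delta>_sum, of i] by simp
    then show ?thesis
      unfolding ivec_def by simp
  qed
  have "(\<lambda>i. 2 * Kperp b (ivec \<delta>) i) = Kperp b (ivec (\<lambda>i. 2 * \<delta> i) :: nat \<Rightarrow> real)"
    by (simp add: ivec_def flip: Kperp_scale)
  also have "\<dots> = ivec z"
    unfolding two_\<delta> by (rule Kperp_K_orth_sum[OF kz])
  finally have Kperp_\<delta>: "2 * Kperp b (ivec \<delta>) i = (ivec z i :: real)" for i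
    by (rule fun_cong)
  have "2 * (ivec \<delta> i :: real) = ivec k i + ivec z i" for i
  proof -
    have "real_of_int (2 * \<delta> i) = real_of_int (k i + z i)"
      using fun_cong[OF two_\<delta>, of i] by simp
    then show ?thesis
      unfolding ivec_def by simp
  qed
  then have Kdual_\<delta>: "2 * Kdual b (Kcoords b (ivec \<delta>)) i = (ivec k i :: real)" for i
    using Kperp_\<delta>[of i] unfolding Kperp_def by simp
  show ?thesis
  proof
    fix i
    show "(ivec (I \<delta>) i :: real) = Kperp b (ivec \<delta>) i - Kdual b (Kcoords b (ivec \<delta>)) i"
      using I\<delta>[of i] Kperp_\<delta>[of i] Kdual_\<delta>[of i] by linarith
  qed
qed

end

section \<open>Paths in the period domain\<close>

definition cvec :: "(nat \<Rightarrow> real) \<Rightarrow> (nat \<Rightarrow> real) \<Rightarrow> nat \<Rightarrow> complex" where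
  "cvec x y = (\<lambda>k. complex_of_real (x k) + \<i> * complex_of_real (y k))"

lemma bil_cvec:
  "bil n G (cvec x y) (cvec x' y') =
     complex_of_real (bil n G x x' - bil n G y y') + \<i> * complex_of_real (bil n G x y' + bil n G y x')"
  unfolding cvec_def bil_add_left bil_add_right bil_scale_left bil_scale_right bil_of_real
  by (simp add: algebra_simps)

lemma cnj_cvec: "(\<lambda>k. cnj (cvec x y k)) = cvec x (\<lambda>k. - y k)"
  unfolding cvec_def by (simp add: fun_eq_iff)

lemma cvec_Re_Im: "cvec (\<lambda>k. Re (\<omega> k)) (\<lambda>k. Im (\<omega> k)) = \<omega>"
  unfolding cvec_def by (simp add: fun_eq_iff complex_eq_iff)

lemma cvec_in_lin_span: "x \<in> lin_span S \<Longrightarrow> y \<in> lin_span S \<Longrightarrow> cvec x y \<in> lin_span S"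
  unfolding cvec_def by (intro lin_span_add lin_span_scale lin_span_of_real)

lemma bK3_cvec_ivec:
  "bK3 (cvec x y) (ivec d) = complex_of_real (bK3 x (ivec d)) + \<i> * complex_of_real (bK3 y (ivec d))"
proof -
  have "(ivec d :: nat \<Rightarrow> complex) = cvec (ivec d) (\<lambda>k. 0)"
    unfolding cvec_def ivec_def by simp
  then have "bK3 (cvec x y) (ivec d) = bK3 (cvec x y) (cvec (ivec d) (\<lambda>k. 0))"
    by (simp only:)
  also have "\<dots> = complex_of_real (bK3 x (ivec d)) + \<i> * complex_of_real (bK3 y (ivec d))"
    unfolding bil_cvec by (simp add: bil_def)
  finally show ?thesis .
qed

lemma period_cone_cvec_iff:
  "cvec x y \<in> period_cone S \<longleftrightarrow>
     cvec x y \<in> cx_span S \<and> bK3 y y = bK3 x x \<and> bK3 x y = 0 \<and> 0 < bK3 x x"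
proof -
  have "bK3 (cvec x y) (cvec x y) = complex_of_real (bK3 x x - bK3 y y) + \<i> * complex_of_real (2 * bK3 x y)"
    unfolding bil_cvec by (simp add: bK3_commute[of y x])
  moreover have "bK3 (cvec x y) (\<lambda>k. cnj (cvec x y k)) = complex_of_real (bK3 x x + bK3 y y)"
    unfolding cnj_cvec bil_cvec by (simp add: bil_minus_right bK3_commute[of y x])
  ultimately show ?thesis
    unfolding period_cone_def by (auto simp: complex_eq_iff)
qed

lemma connected_component_path:
  fixes g :: "real \<Rightarrow> 'a::topological_space"
  assumes "continuous_on {0..1} g" "\<forall>t\<in>{0..1}. g t \<in> S"
  shows "g 0 \<in> connected_component_set S (g 1)"
proof -
  have "connected (g ` {0..1})"
    by (rule connected_continuous_image[OF assms(1)]) simp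
  moreover have "g ` {0..1} \<subseteq> S"
    using assms(2) by auto
  ultimately show ?thesis
    unfolding connected_component_def mem_Collect_eq by (intro exI[of _ "g ` {0..1}"]) auto
qed

text \<open>The vector of \<open>span(X, Y)\<close> orthogonal to \<open>X\<close> with the same norm as \<open>X\<close>
  (Gram-Schmidt, assuming \<open>span(X, Y)\<close> is a positive definite plane).\<close>
definition orth_partner :: "(nat \<Rightarrow> real) \<Rightarrow> (nat \<Rightarrow> real) \<Rightarrow> nat \<Rightarrow> real" where
  "orth_partner X Y = (\<lambda>k. (bK3 X X / sqrt (bK3 X X * bK3 Y Y - (bK3 X Y)\<^sup>2)) * (Y k - (bK3 X Y / bK3 X X) * X k))"

lemma orth_partner:
  assumes "0 < bK3 X X" "0 < bK3 X X * bK3 Y Y - (bK3 X Y)\<^sup>2"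
  shows "bK3 (orth_partner X Y) (orth_partner X Y) = bK3 X X" "bK3 X (orth_partner X Y) = 0"
proof -
  define a c d where "a = bK3 X X" and "c = bK3 X Y" and "d = bK3 Y Y"
  define l where "l = a / sqrt (a * d - c\<^sup>2)"
  have a: "a > 0" and ad: "a * d - c\<^sup>2 > 0"
    using assms unfolding a_def c_def d_def by auto
  have Z: "orth_partner X Y = (\<lambda>k. l * (Y k - (c / a) * X k))"
    unfolding orth_partner_def l_def a_def c_def d_def ..
  have "bK3 (orth_partner X Y) (orth_partner X Y) = l\<^sup>2 * (d - 2 * (c / a) * c + (c / a)\<^sup>2 * a)"
    unfolding Z bil_scale_left bil_scale_right bil_diff_left bil_diff_right a_def c_def d_def
    using bK3_commute[of Y X] by (simp add: power2_eq_square algebra_simps)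
  also have "\<dots> = a"
    unfolding l_def using a ad by (simp add: power_divide field_simps power2_eq_square)
  finally show "bK3 (orth_partner X Y) (orth_partner X Y) = bK3 X X"
    unfolding a_def .
  have "bK3 X (orth_partner X Y) = l * (c - (c / a) * a)"
    unfolding Z bil_scale_right bil_diff_right by (simp add: a_def c_def)
  then show "bK3 X (orth_partner X Y) = 0"
    using a by simp
qed

lemma orth_partner_self:
  assumes "bK3 Y Y = bK3 X X" "bK3 X Y = 0" "0 < bK3 X X"
  shows "orth_partner X Y = Y"
  using assms unfolding orth_partner_def by (simp add: real_sqrt_mult power2_eq_square)

lemma orth_partner_Kdual: "\<exists>l m. orth_partner (Kdual b G) (Kdual b G') = Kdual b (\<lambda>j. l * (G' j + m * G j))"
proof -
  define X Y where "X = Kdual b G" and "Y = Kdual b G'"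
  show ?thesis
    unfolding orth_partner_def Kdual_scale Kdual_add X_def[symmetric] Y_def[symmetric]
    by (intro exI[of _ "bK3 X X / sqrt (bK3 X X * bK3 Y Y - (bK3 X Y)\<^sup>2)"] exI[of _ "- (bK3 X Y / bK3 X X)"]) simp
qed

lemma cvec_orth_partner_in_period_cone:
  assumes "X \<in> lin_span S" "Y \<in> lin_span S"
    and pos: "0 < bK3 X X" "0 < bK3 X X * bK3 Y Y - (bK3 X Y)\<^sup>2"
  shows "cvec X (orth_partner X Y) \<in> period_cone S"
proof -
  have "(\<lambda>k. Y k + (- (bK3 X Y / bK3 X X)) * X k) \<in> lin_span S"
    by (rule lin_span_lincomb[OF assms(2,1)])
  then have "orth_partner X Y \<in> lin_span S"
    unfolding orth_partner_def by (intro lin_span_scale) simp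
  then show ?thesis
    unfolding period_cone_cvec_iff cx_span_eq_lin_span
    using orth_partner[OF pos] assms(1) pos(1) by (auto intro: cvec_in_lin_span)
qed

text \<open>Shrinking the negative definite part of a positive 2-plane keeps it positive:
  with \<open>A = P\<^sub>1\<^sub>1 + u W\<^sub>1\<^sub>1\<close>, \<open>C = P\<^sub>1\<^sub>2 + u W\<^sub>1\<^sub>2\<close>, \<open>D = P\<^sub>2\<^sub>2 + u W\<^sub>2\<^sub>2\<close> one has
  \<open>A (A D - C\<^sup>2) = s (A\<^sup>2 + C\<^sup>2) - (1 - u) W(C, -A)\<close>.\<close>
lemma shrunk_gram_pos:
  fixes s P11 P12 P22 W11 W12 W22 u :: real
  assumes s: "0 < s" and sums: "P11 + W11 = s" "P22 + W22 = s" "P12 + W12 = 0"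
    and W: "\<And>\<alpha> \<beta>. W11 * \<alpha>\<^sup>2 + 2 * W12 * \<alpha> * \<beta> + W22 * \<beta>\<^sup>2 \<le> 0"
    and u: "0 \<le> u" "u \<le> 1"
  shows "0 < P11 + u * W11" "0 < (P11 + u * W11) * (P22 + u * W22) - (P12 + u * W12)\<^sup>2"
proof -
  define A C D where "A = P11 + u * W11" and "C = P12 + u * W12" and "D = P22 + u * W22"
  have "W11 \<le> 0"
    using W[of 1 0] by simp
  then have "(1 - u) * W11 \<le> 0"
    using u by (simp add: mult_nonneg_nonpos)
  moreover have "A = s - (1 - u) * W11"
    unfolding A_def using sums(1) by (simp add: algebra_simps)
  ultimately have A: "s \<le> A"
    by simp
  then show "0 < P11 + u * W11"
    using s unfolding A_def by simp
  have P: "P11 = s - W11" "P12 = - W12" "P22 = s - W22"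
    using sums by linarith+
  have "A * (A * D - C\<^sup>2) = s * (C\<^sup>2 + A\<^sup>2) - (1 - u) * (W11 * C\<^sup>2 + 2 * W12 * C * (- A) + W22 * (- A)\<^sup>2)"
    unfolding A_def C_def D_def P by (simp add: power2_eq_square algebra_simps)
  moreover have "(1 - u) * (W11 * C\<^sup>2 + 2 * W12 * C * (- A) + W22 * (- A)\<^sup>2) \<le> 0"
    using u W[of C "- A"] by (simp add: mult_nonneg_nonpos)
  moreover have "0 < s * (C\<^sup>2 + A\<^sup>2)"
    using s A by (intro mult_pos_pos) (auto simp: add_nonneg_pos)
  ultimately have "0 < A * (A * D - C\<^sup>2)"
    by linarith
  then show "0 < (P11 + u * W11) * (P22 + u * W22) - (P12 + u * W12)\<^sup>2"
    using A s unfolding A_def C_def D_def by (simp add: zero_less_mult_iff)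
qed

text \<open>The path scales the \<open>w\<^sub>i\<close> down to \<open>0\<close> and re-orthonormalises with \<^const>\<open>orth_partner\<close>.\<close>
lemma deform_to_positive_part:
  fixes p1 p2 w1 w2 :: "nat \<Rightarrow> real"
  assumes span: "p1 \<in> lin_span S" "p2 \<in> lin_span S" "w1 \<in> lin_span S" "w2 \<in> lin_span S"
    and period: "cvec (\<lambda>k. p1 k + w1 k) (\<lambda>k. p2 k + w2 k) \<in> period_cone S"
    and orth: "bK3 p1 w1 = 0" "bK3 p1 w2 = 0" "bK3 p2 w1 = 0" "bK3 p2 w2 = 0"
    and neg: "\<And>\<alpha> \<beta>. bK3 (\<lambda>k. \<alpha> * w1 k + \<beta> * w2 k) (\<lambda>k. \<alpha> * w1 k + \<beta> * w2 k) \<le> 0"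
  shows "0 < bK3 p1 p1" "0 < bK3 p1 p1 * bK3 p2 p2 - (bK3 p1 p2)\<^sup>2"
    and "cvec p1 (orth_partner p1 p2)
           \<in> connected_component_set (period_cone S) (cvec (\<lambda>k. p1 k + w1 k) (\<lambda>k. p2 k + w2 k))"
proof -
  define X Y where "X t = (\<lambda>k. p1 k + t * w1 k)" and "Y t = (\<lambda>k. p2 k + t * w2 k)" for t :: real
  define P11 P12 P22 where "P11 = bK3 p1 p1" and "P12 = bK3 p1 p2" and "P22 = bK3 p2 p2"
  define W11 W12 W22 where "W11 = bK3 w1 w1" and "W12 = bK3 w1 w2" and "W22 = bK3 w2 w2"
  have orth': "bK3 w1 p1 = 0" "bK3 w2 p1 = 0" "bK3 w1 p2 = 0" "bK3 w2 p2 = 0"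
    using orth bK3_commute by metis+
  have XX: "bK3 (X t) (X t) = P11 + t\<^sup>2 * W11"
    and XY: "bK3 (X t) (Y t) = P12 + t\<^sup>2 * W12"
    and YY: "bK3 (Y t) (Y t) = P22 + t\<^sup>2 * W22" for t
    unfolding X_def Y_def P11_def P12_def P22_def W11_def W12_def W22_def
    by (simp_all add: bil_add_left bil_add_right bil_scale_left bil_scale_right orth orth' power2_eq_square)
  obtain s where s: "0 < s" "P11 + W11 = s" "P22 + W22 = s" "P12 + W12 = 0"
    using period unfolding period_cone_cvec_iff using XX[of 1] XY[of 1] YY[of 1]
    by (simp add: X_def Y_def)
  have W: "W11 * \<alpha>\<^sup>2 + 2 * W12 * \<alpha> * \<beta> + W22 * \<beta>\<^sup>2 \<le> 0" for \<alpha> \<beta>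
    using neg[of \<alpha> \<beta>] unfolding bK3_norm_lincomb W11_def W12_def W22_def by (simp add: algebra_simps)
  have pos: "0 < bK3 (X t) (X t)" "0 < bK3 (X t) (X t) * bK3 (Y t) (Y t) - (bK3 (X t) (Y t))\<^sup>2"
    if "t \<in> {0..1}" for t
    using shrunk_gram_pos[OF s W, of "t\<^sup>2"] that unfolding XX XY YY by (auto simp: power_le_one)
  then show "0 < bK3 p1 p1" "0 < bK3 p1 p1 * bK3 p2 p2 - (bK3 p1 p2)\<^sup>2"
    using pos[of 0] by (simp_all add: X_def Y_def)
  define \<omega> where "\<omega> t = cvec (X t) (orth_partner (X t) (Y t))" for t
  have "\<omega> t \<in> period_cone S" if "t \<in> {0..1}" for t
    unfolding \<omega>_def X_def Y_def using span pos[OF that, unfolded X_def Y_def]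
    by (intro cvec_orth_partner_in_period_cone lin_span_lincomb)
  moreover have "continuous_on {0..1} \<omega>"
  proof (rule continuous_on_coordinatewise_then_product)
    fix k
    have "\<forall>t\<in>{0..1}. P11 + t\<^sup>2 * W11 \<noteq> 0
        \<and> sqrt ((P11 + t\<^sup>2 * W11) * (P22 + t\<^sup>2 * W22) - (P12 + t\<^sup>2 * W12)\<^sup>2) \<noteq> 0"
      using pos unfolding XX XY YY by fastforce
    then show "continuous_on {0..1} (\<lambda>t. \<omega> t k)"
      unfolding \<omega>_def cvec_def orth_partner_def XX XY YY unfolding X_def Y_def
      by (intro continuous_intros) auto
  qed
  moreover have "\<omega> 1 = cvec (\<lambda>k. p1 k + w1 k) (\<lambda>k. p2 k + w2 k)"
    using period unfolding \<omega>_def period_cone_cvec_iff by (simp add: X_def Y_def orth_partner_self)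
  ultimately show "cvec p1 (orth_partner p1 p2)
      \<in> connected_component_set (period_cone S) (cvec (\<lambda>k. p1 k + w1 k) (\<lambda>k. p2 k + w2 k))"
    using connected_component_path[of \<omega> "period_cone S"] by (simp add: \<omega>_def X_def Y_def)
qed

lemma square_interpolation_pos:
  fixes p q \<sigma> \<tau> :: real
  assumes p: "0 < p" and pq: "0 < p + \<sigma>\<^sup>2 * q" and \<tau>: "\<tau> \<in> {0..1}"
  shows "0 < p + (\<tau> * \<sigma>)\<^sup>2 * q"
proof -
  have "0 \<le> 1 - \<tau>\<^sup>2"
    using \<tau> by (simp add: power_le_one)
  have "0 < (1 - \<tau>\<^sup>2) * p + \<tau>\<^sup>2 * (p + \<sigma>\<^sup>2 * q)"
  proof (cases "\<tau> = 0")
    case False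
    then show ?thesis
      using p pq \<open>0 \<le> 1 - \<tau>\<^sup>2\<close> by (intro add_nonneg_pos[OF mult_nonneg_nonneg mult_pos_pos]) auto
  qed (use p in simp)
  then show ?thesis
    by (simp add: power_mult_distrib algebra_simps)
qed

text \<open>For \<open>qK a = -1\<close>, the orthogonal projection onto the part of \<open>K \<otimes> \<real>\<close> orthogonal to
  \<open>Kdual b a\<close>.\<close>
definition Kproj_orth :: "(nat \<Rightarrow> nat \<Rightarrow> int) \<Rightarrow> (nat \<Rightarrow> real) \<Rightarrow> (nat \<Rightarrow> real) \<Rightarrow> nat \<Rightarrow> real" where
  "Kproj_orth b a v = Kdual b (\<lambda>j. Kcoords b v j + bK (Kcoords b v) a * a j)"

lemma bK_proj_orth: "qK a = -1 \<Longrightarrow> bK (\<lambda>j. g j + bK g a * a j) a = (0 :: real)"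
  unfolding bK_add_left bK_scale_left bK_self by simp

lemma Kproj_orth_lincomb:
  "Kproj_orth b a (\<lambda>k. \<alpha> * x k + \<beta> * y k) = (\<lambda>k. \<alpha> * Kproj_orth b a x k + \<beta> * Kproj_orth b a y k)"
proof -
  have "(\<lambda>j. Kcoords b (\<lambda>k. \<alpha> * x k + \<beta> * y k) j + bK (Kcoords b (\<lambda>k. \<alpha> * x k + \<beta> * y k)) a * a j)
      = (\<lambda>j. \<alpha> * (Kcoords b x j + bK (Kcoords b x) a * a j) + \<beta> * (Kcoords b y j + bK (Kcoords b y) a * a j))"
    unfolding Kcoords_add Kcoords_scale bK_add_left bK_scale_left by (simp add: algebra_simps)
  then show ?thesis
    unfolding Kproj_orth_def by (simp add: Kdual_add Kdual_scale)
qed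

lemma Kproj_orth_complement_eq:
  "(\<lambda>k. v k - Kproj_orth b a v k) = (\<lambda>k. Kperp b v k + (- bK (Kcoords b v) a) * Kdual b a k)"
  unfolding Kproj_orth_def Kperp_def Kdual_add Kdual_scale by (simp add: fun_eq_iff)

context lattice_frame
begin

lemma Kdual_in_period_cone:
  fixes G H :: "nat \<Rightarrow> real"
  assumes "0 < qK G" "qK H = qK G" "bK G H = 0"
  shows "cvec (Kdual b G) (Kdual b H) \<in> period_cone Lam"
  unfolding period_cone_cvec_iff cx_span_eq_lin_span using assms
  by (simp add: bK3_Kdual_norm[OF K_basis] bK3_Kdual_Kdual[OF K_basis] cvec_in_lin_span Kdual_in_lin_span_Lam)

lemma Kdual_path_in_component:
  fixes P Q g :: "nat \<Rightarrow> real"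
  assumes P: "0 < qK P" and Q: "qK Q = qK P" "bK P Q = 0"
    and g: "bK P g = 0" "bK Q g = 0" and pos: "0 < qK P + \<sigma>\<^sup>2 * qK g"
  shows "cvec (Kdual b (\<lambda>j. P j + \<sigma> * g j)) (Kdual b (\<lambda>j. sqrt ((qK P + \<sigma>\<^sup>2 * qK g) / qK P) * Q j))
           \<in> connected_component_set (period_cone Lam) (cvec (Kdual b P) (Kdual b Q))"
proof -
  define G where "G \<tau> = (\<lambda>j. P j + (\<tau> * \<sigma>) * g j)" for \<tau>
  define \<rho> where "\<rho> \<tau> = sqrt ((qK P + (\<tau> * \<sigma>)\<^sup>2 * qK g) / qK P)" for \<tau>
  define \<omega> where "\<omega> \<tau> = cvec (Kdual b (G \<tau>)) (Kdual b (\<lambda>j. \<rho> \<tau> * Q j))" for \<tau>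
  have qK_G: "qK (G \<tau>) = qK P + (\<tau> * \<sigma>)\<^sup>2 * qK g" for \<tau>
    unfolding G_def qK_lincomb g by simp
  have "0 < qK (G \<tau>)" if "\<tau> \<in> {0..1}" for \<tau>
    unfolding qK_G using square_interpolation_pos[OF P pos that] .
  moreover have "qK (\<lambda>j. \<rho> \<tau> * Q j) = qK (G \<tau>)" if "0 < qK (G \<tau>)" for \<tau>
  proof -
    have "qK (\<lambda>j. \<rho> \<tau> * Q j) = (\<rho> \<tau>)\<^sup>2 * qK P"
      unfolding qK_scale Q(1) ..
    also have "(\<rho> \<tau>)\<^sup>2 = qK (G \<tau>) / qK P"
      unfolding \<rho>_def qK_G[symmetric] using that P by simp
    finally show ?thesis
      using P by simp
  qed
  moreover have "bK (G \<tau>) (\<lambda>j. \<rho> \<tau> * Q j) = 0" for \<tau>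
    unfolding G_def bK_scale_right bK_add_left bK_scale_left using Q(2) g(2) bK_commute[of g Q] by simp
  ultimately have "\<omega> \<tau> \<in> period_cone Lam" if "\<tau> \<in> {0..1}" for \<tau>
    unfolding \<omega>_def using that by (intro Kdual_in_period_cone) auto
  moreover have "continuous_on {0..1} \<omega>"
  proof (rule continuous_on_coordinatewise_then_product)
    fix k
    show "continuous_on {0..1} (\<lambda>\<tau>. \<omega> \<tau> k)"
      unfolding \<omega>_def cvec_def G_def \<rho>_def Kdual_add Kdual_scale using P
      by (intro continuous_intros) auto
  qed
  ultimately have "\<omega> 0 \<in> connected_component_set (period_cone Lam) (\<omega> 1)"
    by (intro connected_component_path) auto
  moreover have "\<omega> 0 = cvec (Kdual b P) (Kdual b Q)"
    unfolding \<omega>_def G_def \<rho>_def using P by simp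
  ultimately show ?thesis
    unfolding \<omega>_def G_def \<rho>_def by (simp add: connected_component_sym_eq)
qed

lemma bK3_Kproj_orth_complement:
  assumes a: "qK a = -1"
  shows "bK3 (Kproj_orth b a v) (\<lambda>k. v' k - Kproj_orth b a v' k) = 0"
proof -
  have "bK3 (Kproj_orth b a v) (\<lambda>k. v' k - Kproj_orth b a v' k)
      = bK3 (Kproj_orth b a v) (\<lambda>k. Kperp b v' k + (- bK (Kcoords b v') a) * Kdual b a k)"
    by (simp only: Kproj_orth_complement_eq)
  also have "\<dots> = 0"
    unfolding Kproj_orth_def bil_add_right bil_scale_right bK3_Kdual_Kperp[OF K_basis]
      bK3_Kdual_Kdual[OF K_basis]
    using bK_proj_orth[OF a] by simp
  finally show ?thesis .
qed

lemma Kproj_orth_complement_nonpos: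
  assumes a: "qK a = -1" and v: "v \<in> lin_span Lam"
  shows "bK3 (\<lambda>k. v k - Kproj_orth b a v k) (\<lambda>k. v k - Kproj_orth b a v k) \<le> 0"
proof -
  define c where "c = - bK (Kcoords b v) a"
  have "bK3 (\<lambda>k. Kperp b v k + c * Kdual b a k) (\<lambda>k. Kperp b v k + c * Kdual b a k)
      = bK3 (Kperp b v) (Kperp b v) + 2 * c * bK3 (Kperp b v) (Kdual b a) + c\<^sup>2 * bK3 (Kdual b a) (Kdual b a)"
    unfolding bK3_norm_add by (simp add: bil_scale_left bil_scale_right power2_eq_square)
  also have "\<dots> = bK3 (Kperp b v) (Kperp b v) - c\<^sup>2"
    unfolding bK3_commute[of "Kperp b v" "Kdual b a"] bK3_Kdual_Kperp[OF K_basis]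
      bK3_Kdual_norm[OF K_basis] a by simp
  also have "\<dots> \<le> 0"
    using Kperp_norm_nonpos[OF v] zero_le_power2[of c] by linarith
  finally show ?thesis
    unfolding Kproj_orth_complement_eq c_def .
qed

text \<open>Deform \<open>\<omega>\<^sub>0\<close> onto its projection to \<open>(K \<otimes> \<real>) \<inter> a\<^sup>\<perp>\<close>; the complement is negative
  semidefinite since \<open>E\<close> is negative definite and \<open>qK a < 0\<close>.\<close>
lemma component_meets_K_span:
  fixes a :: "nat \<Rightarrow> real"
  assumes a: "qK a = -1" and \<omega>0: "\<omega>0 \<in> period_cone Lam"
  obtains P Q where "cvec (Kdual b P) (Kdual b Q) \<in> connected_component_set (period_cone Lam) \<omega>0"
    and "bK P a = 0" "bK Q a = 0" "0 < qK P" "qK Q = qK P" "bK P Q = 0"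
proof -
  define x y where "x = (\<lambda>k. Re (\<omega>0 k))" and "y = (\<lambda>k. Im (\<omega>0 k))"
  define G where "G v = (\<lambda>j. Kcoords b v j + bK (Kcoords b v) a * a j)" for v
  define w where "w v = (\<lambda>k. v k - Kproj_orth b a v k)" for v
  have xy: "x \<in> lin_span Lam" "y \<in> lin_span Lam"
    using \<omega>0 lin_span_Re lin_span_Im unfolding period_cone_def cx_span_eq_lin_span x_def y_def by auto
  have w: "w v \<in> lin_span Lam" if "v \<in> lin_span Lam" for v
    using lin_span_lincomb[OF that Kdual_in_lin_span_Lam, of "-1"] unfolding w_def Kproj_orth_def by simp
  have Kp: "Kproj_orth b a v = Kdual b (G v)" for v
    unfolding Kproj_orth_def G_def ..
  have p: "Kproj_orth b a v \<in> lin_span Lam" for v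
    unfolding Kp by (rule Kdual_in_lin_span_Lam)
  have split: "cvec (\<lambda>k. Kproj_orth b a x k + w x k) (\<lambda>k. Kproj_orth b a y k + w y k) = \<omega>0"
    by (simp add: w_def x_def y_def cvec_Re_Im)
  have orth: "bK3 (Kproj_orth b a v) (w v') = 0" for v v'
    unfolding w_def by (rule bK3_Kproj_orth_complement[OF a])
  have neg: "bK3 (\<lambda>k. \<alpha> * w x k + \<beta> * w y k) (\<lambda>k. \<alpha> * w x k + \<beta> * w y k) \<le> 0" for \<alpha> \<beta>
  proof -
    have "(\<lambda>k. \<alpha> * w x k + \<beta> * w y k) = w (\<lambda>k. \<alpha> * x k + \<beta> * y k)"
      unfolding w_def Kproj_orth_lincomb by (simp add: algebra_simps)
    then show ?thesis
      unfolding w_def using xy by (simp add: Kproj_orth_complement_nonpos[OF a] lin_span_add lin_span_scale)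
  qed
  note deform = deform_to_positive_part[OF p[of x] p[of y] w[OF xy(1)] w[OF xy(2)] _ orth orth orth orth neg,
      unfolded split, OF \<omega>0, unfolded Kp]
  obtain l m where Q: "orth_partner (Kdual b (G x)) (Kdual b (G y)) = Kdual b (\<lambda>j. l * (G y j + m * G x j))"
    using orth_partner_Kdual by blast
  have Ga: "bK (G v) a = 0" for v
    unfolding G_def by (rule bK_proj_orth[OF a])
  show thesis
  proof
    show "cvec (Kdual b (G x)) (Kdual b (\<lambda>j. l * (G y j + m * G x j)))
        \<in> connected_component_set (period_cone Lam) \<omega>0"
      using deform(3) unfolding Q .
    show "bK (G x) a = 0" "bK (\<lambda>j. l * (G y j + m * G x j)) a = 0"
      by (simp_all add: Ga bK_scale_left bK_add_left)
    show "0 < qK (G x)"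
      using deform(1) unfolding bK3_Kdual_norm[OF K_basis] .
    show "qK (\<lambda>j. l * (G y j + m * G x j)) = qK (G x)" "bK (G x) (\<lambda>j. l * (G y j + m * G x j)) = 0"
      using orth_partner[OF deform(1,2)] unfolding Q bK3_Kdual_norm[OF K_basis] bK3_Kdual_Kdual[OF K_basis]
      by simp_all
  qed
qed

text \<open>The complement of the positive plane \<open>\<langle>P, Q\<rangle>\<close> is negative definite, so the component \<open>g\<close>
  of \<open>e\<close> orthogonal to \<open>a\<close> has \<open>qK g < 0\<close>, and \<open>P\<close> may be tilted towards \<open>g\<close>.\<close>
lemma component_leaves_hyperplane:
  fixes a e P Q :: "nat \<Rightarrow> real"
  assumes a: "qK a = -1" and P: "bK P a = 0" "0 < qK P" and Q: "bK Q a = 0" "qK Q = qK P" "bK P Q = 0"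
    and e: "bK P e = 0" "bK Q e = 0" and not_proportional: "\<not> (\<forall>j<4. e j + bK e a * a j = 0)"
  obtains G H
  where "cvec (Kdual b G) (Kdual b H) \<in> connected_component_set (period_cone Lam) (cvec (Kdual b P) (Kdual b Q))"
    and "bK G a = 0" "bK H a = 0" "bK G e \<noteq> 0"
proof -
  define c where "c = bK e a"
  define g where "g = (\<lambda>j. e j + c * a j)"
  have ga: "bK g a = 0"
    unfolding g_def c_def by (rule bK_proj_orth[OF a])
  have Pg: "bK P g = 0" and Qg: "bK Q g = 0"
    unfolding g_def bK_add_right bK_scale_right using P(1) Q(1) e by simp_all
  have "qK g < 0"
  proof (rule ccontr)
    assume "\<not> qK g < 0"
    then have "g 0 = 0 \<and> g 1 = 0 \<and> g 2 = 0 \<and> g 3 = 0"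
      using orth_positive_plane_nonneg_eq_0[OF P(2) Q(2,3) Pg Qg] by simp
    then show False
      using not_proportional less_4_cases unfolding g_def c_def by fastforce
  qed
  have ge: "bK g e = qK g"
  proof -
    have "bK g e = qK e + c * c"
      unfolding g_def bK_add_left bK_scale_left bK_self c_def using bK_commute[of a e] by simp
    moreover have "qK g = qK e + c * c"
      unfolding g_def qK_lincomb a c_def by (simp add: power2_eq_square)
    ultimately show ?thesis by simp
  qed
  define \<sigma> where "\<sigma> = sqrt (qK P / (-2 * qK g))"
  have \<sigma>: "0 < \<sigma>" "\<sigma>\<^sup>2 * qK g = - qK P / 2"
    unfolding \<sigma>_def using P(2) \<open>qK g < 0\<close> by (simp_all add: divide_pos_neg field_simps)
  then have "0 < qK P + \<sigma>\<^sup>2 * qK g"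
    using P(2) by simp
  note path = Kdual_path_in_component[OF P(2) Q(2,3) Pg Qg this]
  show thesis
  proof (rule that[OF path])
    show "bK (\<lambda>j. P j + \<sigma> * g j) a = 0"
      unfolding bK_add_left bK_scale_left P(1) ga by simp
    show "bK (\<lambda>j. sqrt ((qK P + \<sigma>\<^sup>2 * qK g) / qK P) * Q j) a = 0"
      unfolding bK_scale_left Q(1) by simp
    show "bK (\<lambda>j. P j + \<sigma> * g j) e \<noteq> 0"
      unfolding bK_add_left bK_scale_left e(1) ge using \<sigma>(1) \<open>qK g < 0\<close> by simp
  qed
qed

lemma bK3_cvec_Kdual_ivec:
  "bK3 (cvec (Kdual b G) (Kdual b H)) (ivec v)
     = complex_of_real (bK G (Kcoords b (ivec v))) + \<i> * complex_of_real (bK H (Kcoords b (ivec v)))"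
  unfolding bK3_cvec_ivec bK3_Kdual_left ..

lemma hyp_eq_imp_Kcoords_proportional:
  fixes a e :: "nat \<Rightarrow> real"
  assumes \<omega>0: "\<omega>0 \<in> period_cone Lam"
    and a: "a = Kcoords b (ivec \<delta>)" "qK a = -1" and e: "e = Kcoords b (ivec d)"
    and hyp_eq: "hyp d \<inter> (connected_component_set (period_cone Lam) \<omega>0 \<inter> cx_span K)
                 = hyp \<delta> \<inter> (connected_component_set (period_cone Lam) \<omega>0 \<inter> cx_span K)"
  shows "\<forall>j<4. e j + bK e a * a j = 0"
proof (rule ccontr)
  assume not_proportional: "\<not> (\<forall>j<4. e j + bK e a * a j = 0)"
  define C where "C = connected_component_set (period_cone Lam) \<omega>0"
  have off_hyp: False if "cvec (Kdual b G) (Kdual b H) \<in> C" "bK G a = 0" "bK H a = 0" "bK G e \<noteq> 0 \<or> bK H e \<noteq> 0"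
    for G H
  proof -
    have "cvec (Kdual b G) (Kdual b H) \<in> cx_span K"
      unfolding cx_span_eq_lin_span by (intro cvec_in_lin_span lin_span_Kdual[OF K_basis K_eq])
    moreover have "cvec (Kdual b G) (Kdual b H) \<in> hyp \<delta>"
      using that(2,3) unfolding hyp_def mem_Collect_eq bK3_cvec_Kdual_ivec a(1) by simp
    ultimately have "cvec (Kdual b G) (Kdual b H) \<in> hyp d"
      using hyp_eq that(1) unfolding C_def by blast
    then show False
      using that(4) unfolding hyp_def mem_Collect_eq bK3_cvec_Kdual_ivec e by (simp add: complex_eq_iff)
  qed
  obtain P Q where PQ: "cvec (Kdual b P) (Kdual b Q) \<in> C"
    "bK P a = 0" "bK Q a = 0" "0 < qK P" "qK Q = qK P" "bK P Q = 0"
    using component_meets_K_span[OF a(2) \<omega>0] unfolding C_def by blast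
  show False
  proof (cases "bK P e = 0 \<and> bK Q e = 0")
    case True
    have "connected_component_set (period_cone Lam) (cvec (Kdual b P) (Kdual b Q)) = C"
      using PQ(1) unfolding C_def by (simp add: connected_component_eq)
    then show False
      using component_leaves_hyperplane[OF a(2) PQ(2,4,3,5,6) conjunct1[OF True] conjunct2[OF True] not_proportional]
        off_hyp by metis
  next
    case False
    then show False
      using off_hyp[OF PQ(1-3)] by blast
  qed
qed

end

section \<open>Roots\<close>

lemma hyp_eq_if_proportional_on_K:
  assumes "\<epsilon> \<noteq> 0" "\<forall>w\<in>K. bK3 w v = \<epsilon> * bK3 w \<delta>"
  shows "hyp v \<inter> (C \<inter> cx_span K) = hyp \<delta> \<inter> (C \<inter> cx_span K)"
proof -
  have "bK3 \<omega> (ivec v) = of_int \<epsilon> * bK3 \<omega> (ivec \<delta>)" if "\<omega> \<in> cx_span K" for \<omega>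
  proof -
    from that obtain n :: nat and c w where \<omega>: "\<omega> = (\<lambda>k. \<Sum>i<n. c i * of_int (w i k))" "\<forall>i<n. w i \<in> K"
      unfolding cx_span_def by blast
    then have \<omega>_ivec: "\<omega> = (\<lambda>k. \<Sum>i<n. c i * ivec (w i) k)"
      by (simp add: ivec_def)
    have "bK3 \<omega> (ivec u) = (\<Sum>i<n. c i * of_int (bK3 (w i) u))" for u
      unfolding \<omega>_ivec by (simp add: bil_sum_left bil_scale_left bil_ivec)
    then show ?thesis
      using \<omega>(2) assms(2) by (simp add: sum_distrib_left mult.left_commute)
  qed
  then show ?thesis
    unfolding hyp_def using assms(1) by auto
qed

context lattice_frame
begin

lemma orbit_proportional_on_K:
  assumes I: "isometry_K3 I" "{x \<in> zvec 22. I x = - x} = K"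
    and \<delta>: "\<delta> \<in> Lam" and d: "d \<in> {\<delta>, - \<delta>, I \<delta>, - I \<delta>}"
  shows "\<exists>\<epsilon>::int. \<epsilon> \<noteq> 0 \<and> (\<forall>w\<in>K. bK3 w d = \<epsilon> * bK3 w \<delta>)"
proof -
  have bK3_minus: "bK3 w (- v) = - bK3 w v" for w v :: "nat \<Rightarrow> int"
    using bil_minus_right[of 22 gram_K3 w v] by (simp add: fun_Compl_def)
  have bK3_I: "bK3 w (I \<delta>) = - bK3 w \<delta>" if "w \<in> K" for w
  proof -
    have zvec: "w \<in> zvec 22" "\<delta> \<in> zvec 22"
      using that K_subset \<delta> Lam_zvec by auto
    have "bK3 w \<delta> = bK3 (I w) (I \<delta>)"
      using I(1) zvec unfolding isometry_K3_def by simp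
    also have "I w = - w"
      using I(2) that zvec by blast
    also have "bK3 (- w) (I \<delta>) = - bK3 w (I \<delta>)"
      using bil_minus_left[of 22 gram_K3 w "I \<delta>"] by (simp add: fun_Compl_def)
    finally show ?thesis
      by simp
  qed
  from d consider "d = \<delta>" | "d = - \<delta>" | "d = I \<delta>" | "d = - I \<delta>"
    by blast
  then show ?thesis
  proof cases
    case 1 then show ?thesis by (intro exI[of _ 1]) simp
  next
    case 2 then show ?thesis using bK3_minus by (intro exI[of _ "-1"]) simp
  next
    case 3 then show ?thesis using bK3_I by (intro exI[of _ "-1"]) simp
  next
    case 4 then show ?thesis using bK3_I bK3_minus by (intro exI[of _ 1]) simp
  qed
qed

lemma root_Kperp_norm:
  assumes "v \<in> Lam" "bK3 v v = -2"
  shows "-2 \<le> qK (Kcoords b v)"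
    and "bK3 (Kperp b (ivec v)) (Kperp b (ivec v)) = - 2 - real_of_int (qK (Kcoords b v))"
  using Lam_norm_split[OF assms(1)] Kperp_norm_nonpos[OF lin_span_ivec[OF assms(1)]] assms(2)
  by simp_all

lemma root_not_orth_K:
  assumes "v \<in> Lam" "bK3 v v = -2"
  shows "\<not> (\<forall>j<4. Kcoords b v j = 0)"
proof
  assume "\<forall>j<4. Kcoords b v j = 0"
  then have "v \<in> lat_span 8 bE"
    using assms(1) orth_K_iff E_eq unfolding orth_in_def by blast
  then have "4 dvd bK3 v v"
    by (rule E8_2_lattice_norm(1)[OF E_basis])
  then show False
    using assms(2) by simp
qed

lemma Kperp_Lam_even:
  assumes "v \<in> Lam" "\<forall>j<4. even (Kcoords b v j)"
  obtains z where "z \<in> lat_span 8 bE" "Kperp b (ivec v) = (ivec z :: nat \<Rightarrow> real)"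
proof -
  obtain k z where kz: "k \<in> K" "z \<in> orth_in Lam K" and v: "v = (\<lambda>i. k i + z i)"
    using Lam_even_decomp[OF assms] by blast
  show thesis
    using that[of z] Kperp_K_orth_sum[OF kz] kz(2) unfolding E_eq v by simp
qed

lemma E_norms_sum_minus_4:
  assumes "z1 \<in> lat_span 8 bE" "z2 \<in> lat_span 8 bE" "bK3 z1 z1 + bK3 z2 z2 = -4"
  shows "z1 = 0 \<or> z2 = 0"
proof -
  obtain n1 n2 where n: "bK3 z1 z1 = 4 * n1" "bK3 z2 z2 = 4 * n2"
    using E8_2_lattice_norm(1)[OF E_basis assms(1)] E8_2_lattice_norm(1)[OF E_basis assms(2)]
    by (elim dvdE)
  moreover have "bK3 z1 z1 \<le> 0" "bK3 z2 z2 \<le> 0"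
    using E8_2_lattice_norm(2)[OF E_basis] assms(1,2) by auto
  ultimately have "n1 + n2 = -1" "n1 \<le> 0" "n2 \<le> 0"
    using assms(3) by linarith+
  then have "n1 = 0 \<or> n2 = 0"
    by (cases "n1 = 0") auto
  then show ?thesis
    using E8_2_lattice_norm(3)[OF E_basis] assms(1,2) n by auto
qed

lemma roots_same_K_component_Kperp:
  assumes roots: "d \<in> Lam" "\<delta> \<in> Lam" "bK3 d d = -2" "bK3 \<delta> \<delta> = -2"
    and \<delta>: "qK (Kcoords b \<delta>) = -1"
    and \<epsilon>: "\<epsilon> = 1 \<or> \<epsilon> = -1" and same: "\<forall>j<4. Kcoords b d j = \<epsilon> * Kcoords b \<delta> j"
  defines "Pd \<equiv> Kperp b (ivec d :: nat \<Rightarrow> real)" and "P\<delta> \<equiv> Kperp b (ivec \<delta> :: nat \<Rightarrow> real)"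
  shows "Pd = (\<lambda>k. of_int \<epsilon> * P\<delta> k) \<or> Pd = (\<lambda>k. - of_int \<epsilon> * P\<delta> k)"
proof -
  have \<epsilon>2: "\<epsilon> * \<epsilon> = 1"
    using \<epsilon> by auto
  have "qK (Kcoords b d) = \<epsilon> * \<epsilon> * qK (Kcoords b \<delta>)"
    unfolding qK_def using same by (simp add: algebra_simps)
  then have norms: "bK3 Pd Pd = -1" "bK3 P\<delta> P\<delta> = -1"
    using root_Kperp_norm(2)[OF roots(1,3)] root_Kperp_norm(2)[OF roots(2,4)] \<delta> \<epsilon>2
    unfolding Pd_def P\<delta>_def by simp_all
  have even: "\<forall>j<4. even (Kcoords b (\<lambda>k. d k + c * \<delta> k) j)" if "c = \<epsilon> \<or> c = - \<epsilon>" for c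
    unfolding Kcoords_add Kcoords_scale using same that by auto
  obtain z1 where z1: "z1 \<in> lat_span 8 bE" "Kperp b (ivec (\<lambda>k. d k + (- \<epsilon>) * \<delta> k)) = (ivec z1 :: nat \<Rightarrow> real)"
    using Kperp_Lam_even[OF Lam_add[OF roots(1) Lam_scale[OF roots(2)]] even] by blast
  obtain z2 where z2: "z2 \<in> lat_span 8 bE" "Kperp b (ivec (\<lambda>k. d k + \<epsilon> * \<delta> k)) = (ivec z2 :: nat \<Rightarrow> real)"
    using Kperp_Lam_even[OF Lam_add[OF roots(1) Lam_scale[OF roots(2)]] even] by blast
  have ivec_lincomb: "(ivec (\<lambda>k. d k + c * \<delta> k) :: nat \<Rightarrow> real) = (\<lambda>k. ivec d k + of_int c * ivec \<delta> k)" for c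
    unfolding ivec_def by simp
  have z1_eq: "ivec z1 = (\<lambda>k. Pd k + (- of_int \<epsilon>) * P\<delta> k)" and z2_eq: "ivec z2 = (\<lambda>k. Pd k + of_int \<epsilon> * P\<delta> k)"
    using z1(2) z2(2) unfolding ivec_lincomb Kperp_lincomb Pd_def P\<delta>_def by simp_all
  have "real_of_int (bK3 z1 z1 + bK3 z2 z2) = bK3 (ivec z1) (ivec z1 :: nat \<Rightarrow> real) + bK3 (ivec z2) (ivec z2 :: nat \<Rightarrow> real)"
    by (simp add: bil_ivec)
  also have "\<dots> = 2 * bK3 Pd Pd + 2 * (of_int \<epsilon> * of_int \<epsilon>) * bK3 P\<delta> P\<delta>"
    unfolding z1_eq z2_eq bK3_norm_plus_minus by (simp add: power2_eq_square)
  finally have "bK3 z1 z1 + bK3 z2 z2 = -4"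
    using norms \<epsilon>2 by (simp flip: of_int_mult)
  with z1(1) z2(1) have "z1 = 0 \<or> z2 = 0"
    by (rule E_norms_sum_minus_4)
  then show ?thesis
  proof
    assume "z1 = 0"
    then have "Pd k + (- of_int \<epsilon>) * P\<delta> k = 0" for k
      using fun_cong[OF z1_eq, of k] by (simp add: ivec_def)
    then show ?thesis
      by (simp add: fun_eq_iff)
  next
    assume "z2 = 0"
    then have "Pd k + of_int \<epsilon> * P\<delta> k = 0" for k
      using fun_cong[OF z2_eq, of k] by (simp add: ivec_def)
    then show ?thesis
      by (simp add: fun_eq_iff eq_neg_iff_add_eq_0)
  qed
qed

lemma roots_same_K_component:
  assumes I: "isometry_K3 I" "{x \<in> zvec 22. I x = - x} = K"
      "{x \<in> zvec 22. I x = x} = {x \<in> zvec 22. \<forall>y\<in>K. bK3 x y = 0}"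
    and roots: "d \<in> Lam" "\<delta> \<in> Lam" "bK3 d d = -2" "bK3 \<delta> \<delta> = -2"
    and \<delta>: "qK (Kcoords b \<delta>) = -1"
    and \<epsilon>: "\<epsilon> = 1 \<or> \<epsilon> = -1" and same: "\<forall>j<4. Kcoords b d j = \<epsilon> * Kcoords b \<delta> j"
  shows "d = (\<lambda>k. \<epsilon> * \<delta> k) \<or> d = (\<lambda>k. - \<epsilon> * I \<delta> k)"
proof -
  define P\<delta> where "P\<delta> = Kperp b (ivec \<delta> :: nat \<Rightarrow> real)"
  define D\<delta> where "D\<delta> = Kdual b (Kcoords b (ivec \<delta> :: nat \<Rightarrow> real))"
  have "Kdual b (Kcoords b (ivec d)) = Kdual b (\<lambda>j. real_of_int \<epsilon> * Kcoords b (ivec \<delta>) j)"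
    using same by (intro Kdual_cong) (simp add: Kcoords_ivec)
  then have d_split: "ivec d k = real_of_int \<epsilon> * D\<delta> k + Kperp b (ivec d) k" for k
    unfolding Kdual_scale D\<delta>_def Kperp_def by simp
  have \<delta>_split: "ivec \<delta> k = D\<delta> k + P\<delta> k" and I\<delta>: "ivec (I \<delta>) k = P\<delta> k - D\<delta> k" for k
    unfolding P\<delta>_def D\<delta>_def involution_ivec[OF I roots(2)] Kperp_def by simp_all
  from roots_same_K_component_Kperp[OF roots \<delta> \<epsilon> same, folded P\<delta>_def] show ?thesis
  proof
    assume "Kperp b (ivec d) = (\<lambda>k. of_int \<epsilon> * P\<delta> k)"
    then have "real_of_int (d k) = real_of_int (\<epsilon> * \<delta> k)" for k
      using d_split[of k] \<delta>_split[of k] by (simp add: ivec_def distrib_left)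
    then show ?thesis
      unfolding of_int_eq_iff by (simp add: fun_eq_iff)
  next
    assume "Kperp b (ivec d) = (\<lambda>k. - of_int \<epsilon> * P\<delta> k)"
    then have "real_of_int (d k) = real_of_int (- \<epsilon> * I \<delta> k)" for k
      using d_split[of k] I\<delta>[of k] by (simp add: ivec_def right_diff_distrib)
    then show ?thesis
      unfolding of_int_eq_iff by (simp add: fun_eq_iff)
  qed
qed

lemma root_qK_cases:
  assumes parity: "\<forall>v\<in>Lam. odd (qK (Kcoords b v)) \<or> 4 dvd qK (Kcoords b v)"
    and root: "v \<in> Lam" "bK3 v v = -2" and nonpos: "qK (Kcoords b v) \<le> 0"
  shows "qK (Kcoords b v) = 0 \<or> qK (Kcoords b v) = -1"
proof -
  have "qK (Kcoords b v) \<in> {-2, -1, 0}"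
    using root_Kperp_norm(1)[OF root] nonpos by auto
  then show ?thesis
    using parity root(1) by fastforce
qed

lemma hyp_eq_imp_Kcoords_multiple:
  assumes \<omega>0: "\<omega>0 \<in> period_cone Lam" and q\<delta>: "qK (Kcoords b \<delta>) = -1"
    and hyp_eq: "hyp d \<inter> (connected_component_set (period_cone Lam) \<omega>0 \<inter> cx_span K)
                 = hyp \<delta> \<inter> (connected_component_set (period_cone Lam) \<omega>0 \<inter> cx_span K)"
  obtains c :: real where "\<And>j. j < 4 \<Longrightarrow> real_of_int (Kcoords b d j) = c * real_of_int (Kcoords b \<delta> j)"
proof
  define a e where "a = (Kcoords b (ivec \<delta>) :: nat \<Rightarrow> real)" and "e = (Kcoords b (ivec d) :: nat \<Rightarrow> real)"
  have "qK a = -1"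
    using q\<delta> unfolding a_def Kcoords_ivec[abs_def] qK_of_int by simp
  then show "real_of_int (Kcoords b d j) = - bK e a * real_of_int (Kcoords b \<delta> j)" if "j < 4" for j
    using hyp_eq_imp_Kcoords_proportional[OF \<omega>0 a_def _ e_def hyp_eq] that
    unfolding a_def e_def Kcoords_ivec by (simp add: add_eq_0_iff2)
qed

lemma hyp_eq_imp_root_orbit:
  assumes parity: "\<forall>v\<in>Lam. odd (qK (Kcoords b v)) \<or> 4 dvd qK (Kcoords b v)"
    and I: "isometry_K3 I" "{x \<in> zvec 22. I x = - x} = K"
      "{x \<in> zvec 22. I x = x} = {x \<in> zvec 22. \<forall>y\<in>K. bK3 x y = 0}"
    and \<omega>0: "\<omega>0 \<in> period_cone Lam"
    and roots: "d \<in> Lam" "\<delta> \<in> Lam" "bK3 d d = -2" "bK3 \<delta> \<delta> = -2"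
    and \<delta>_neg: "qK (Kcoords b \<delta>) < 0"
    and hyp_eq: "hyp d \<inter> (connected_component_set (period_cone Lam) \<omega>0 \<inter> cx_span K)
                 = hyp \<delta> \<inter> (connected_component_set (period_cone Lam) \<omega>0 \<inter> cx_span K)"
  shows "d \<in> {\<delta>, - \<delta>, I \<delta>, - I \<delta>}"
proof -
  have q\<delta>: "qK (Kcoords b \<delta>) = -1"
    using root_qK_cases[OF parity roots(2,4)] \<delta>_neg by simp
  obtain c :: real where c: "\<And>j. j < 4 \<Longrightarrow> real_of_int (Kcoords b d j) = c * real_of_int (Kcoords b \<delta> j)"
    using hyp_eq_imp_Kcoords_multiple[OF \<omega>0 q\<delta> hyp_eq] by blast
  have "real_of_int (qK (Kcoords b d)) = c\<^sup>2 * real_of_int (qK (Kcoords b \<delta>))"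
    unfolding qK_def using c by (simp add: power2_eq_square algebra_simps)
  then have qd: "real_of_int (qK (Kcoords b d)) = - c\<^sup>2"
    using q\<delta> by simp
  then have "qK (Kcoords b d) \<le> 0"
    by (metis of_int_le_0_iff neg_le_0_iff_le zero_le_power2)
  with root_qK_cases[OF parity roots(1,3)] consider "qK (Kcoords b d) = 0" | "qK (Kcoords b d) = -1"
    by blast
  then show ?thesis
  proof cases
    case 1
    then have "\<forall>j<4. Kcoords b d j = 0"
      using qd c by simp
    then show ?thesis
      using root_not_orth_K[OF roots(1,3)] by simp
  next
    case 2
    then have "c\<^sup>2 = 1"
      using qd by simp
    then obtain \<epsilon> :: int where \<epsilon>: "\<epsilon> = 1 \<or> \<epsilon> = -1" "c = of_int \<epsilon>"
      by (metis power2_eq_1_iff of_int_1 of_int_minus)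
    have "\<forall>j<4. Kcoords b d j = \<epsilon> * Kcoords b \<delta> j"
      using c \<epsilon>(2) by (metis of_int_eq_iff of_int_mult)
    then have "d = (\<lambda>k. \<epsilon> * \<delta> k) \<or> d = (\<lambda>k. - \<epsilon> * I \<delta> k)"
      by (rule roots_same_K_component[OF I roots q\<delta> \<epsilon>(1)])
    then show ?thesis
      using \<epsilon>(1) by (auto simp: fun_eq_iff fun_Compl_def)
  qed
qed

end

theorem proposition3p14:
  fixes Lam K :: "(nat \<Rightarrow> int) set"
    and I :: "(nat \<Rightarrow> int) \<Rightarrow> (nat \<Rightarrow> int)"
    and \<omega>0 :: "nat \<Rightarrow> complex"
    and d \<delta> :: "nat \<Rightarrow> int"
  assumes Lam: "iso_to 12 gram_Lambda Lam" "primitive_in_K3 Lam"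
    and K: "iso_to 4 gram_U2U2 K" "K \<subseteq> Lam"
    and E: "iso_to 8 gram_E8_2 (orth_in Lam K)"
    and patching_odd: "\<exists>d1 d2. d1 \<in> lat_dual K - ivec ` K
        \<and> d2 \<in> lat_dual (orth_in Lam K) - ivec ` (orth_in Lam K)
        \<and> ivec ` Lam = {(\<lambda>k. of_int n * (d1 k + d2 k) + of_int (x k) + of_int (y k)) | n x y.
                            x \<in> K \<and> y \<in> orth_in Lam K}
        \<and> (\<exists>m::int. bK3 d1 d1 = of_int (2 * m + 1))"
    and Imu: "isometry_K3 I"
      "{x \<in> zvec 22. I x = - x} = K"
      "{x \<in> zvec 22. I x = x} = {x \<in> zvec 22. \<forall>y\<in>K. bK3 x y = 0}"
    and comp: "\<omega>0 \<in> period_cone Lam"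
    and roots: "d \<in> Lam" "\<delta> \<in> Lam" "bK3 d d = -2" "bK3 \<delta> \<delta> = -2"
    and neg: "\<exists>\<delta>K \<delta>E. \<delta>K \<in> lat_dual K \<and> \<delta>E \<in> lat_dual (orth_in Lam K) \<and> ivec \<delta> = \<delta>K + \<delta>E \<and> bK3 \<delta>K \<delta>K < 0"
  shows "hyp d \<inter> (connected_component_set (period_cone Lam) \<omega>0 \<inter> cx_span K)
           = hyp \<delta> \<inter> (connected_component_set (period_cone Lam) \<omega>0 \<inter> cx_span K)
         \<longleftrightarrow> d \<in> {\<delta>, - \<delta>, I \<delta>, - I \<delta>}"
proof -
  obtain bL where bL: "\<forall>i<12. bL i \<in> zvec 22" "Lam = lat_span 12 bL"
    using Lam(1) unfolding iso_to_def by auto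
  obtain b where b: "U2U2_basis b" "K = lat_span 4 b"
    using K(1) unfolding iso_to_def U2U2_basis_def by auto
  obtain bE where bE: "E8_2_basis bE" "orth_in Lam K = lat_span 8 bE"
    using E unfolding iso_to_def E8_2_basis_def by auto
  interpret lattice_frame b bE bL K Lam
    using bL b bE K(2) by unfold_locales
  obtain d1 d2 m where patch: "d1 \<in> lat_dual K" "d2 \<in> lat_dual (orth_in Lam K)"
      "ivec ` Lam = {(\<lambda>k. of_int n * (d1 k + d2 k) + of_int (x k) + of_int (y k)) | n x y.
                       x \<in> K \<and> y \<in> orth_in Lam K}"
      "bK3 d1 d1 = of_int (2 * m + 1)"
    using patching_odd by blast
  have parity: "\<forall>v\<in>Lam. odd (qK (Kcoords b v)) \<or> 4 dvd qK (Kcoords b v)"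
    using qK_Kcoords_Lam_odd_or_4_dvd[OF patch] by blast
  have "qK (Kcoords b \<delta>) < 0"
    using neg qK_Kcoords_neg by blast
  then show ?thesis
    using hyp_eq_imp_root_orbit[OF parity Imu comp roots] orbit_proportional_on_K[OF Imu(1,2) roots(2)]
      hyp_eq_if_proportional_on_K by blast
qed

end
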